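(* Let $\mathcal L$ be the Heisenberg–Virasoro algebra with basis $\{L_n,I_n,z_1,z_2,z_3: n\in\mathbb Z\}$ and brackets $[L_m,L_n]=(n-m)L_{m+n}+\frac{m^3-m}{12}\delta_{m+n,0}z_1$, $[I_m,I_n]=m\delta_{m+n,0}z_3$, $[L_m,I_n]=nI_{m+n}+\delta_{m+n,0}(m^2+m)z_2$, $[I_0,\mathcal L]=[z_1,\mathcal L]=[z_2,\mathcal L]=[z_3,\mathcal L]=0$. Let $\mathcal H=\mathrm{Span}\{I_r,z_3: r\in\mathbb Z\}$ and $\mathfrak p=\mathrm{Span}\{I_n,z_1,z_2,z_3: n\in\mathbb Z\}$. Let $\phi:\mathfrak p\to\mathbb C$ be a finite Lie algebra homomorphism with $\phi(\mathcal H)\neq 0$, and $S^\phi=\{n\in\mathbb Z:\phi(I_n)\neq 0\}$. Then $W(\phi)$ is irreducible if and only if $|S^\phi|\ge 2$.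
   Context: A Lie algebra homomorphism $\phi:\mathfrak p\to\mathbb C$ is a linear map vanishing on $[\mathfrak p,\mathfrak p]=\mathbb C z_3$. $\phi$ is called finite if $S^\phi$ is finite and $\phi(z_2)=0$. $W(\phi)=\mathcal U(\mathcal L)\otimes_{\mathcal U(\mathfrak p)}\mathbb C w_\phi$, where $\mathbb C w_\phi$ is the one-dimensional $\mathfrak p$-module with $pw_\phi=\phi(p)w_\phi$. *)

theory Defs
  imports Complex_Main
begin

datatype hv = L int | I int | Z1 | Z2 | Z3

text \<open>Structure constants: hv_br x y z is the coefficient of basis element z in [x,y].\<close>
fun hv_br :: "hv \<Rightarrow> hv \<Rightarrow> hv \<Rightarrow> complex" where
  "hv_br (L m) (L n) = (\<lambda>z. (if z = L (m + n) then of_int (n - m) else 0)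
       + (if z = Z1 \<and> m + n = 0 then of_int (m ^ 3 - m) / 12 else 0))"
| "hv_br (I m) (I n) = (\<lambda>z. if z = Z3 \<and> m + n = 0 then of_int m else 0)"
| "hv_br (L m) (I n) = (\<lambda>z. (if z = I (m + n) then of_int n else 0)
       + (if z = Z2 \<and> m + n = 0 then of_int (m ^ 2 + m) else 0))"
| "hv_br (I n) (L m) = (\<lambda>z. - ((if z = I (m + n) then of_int n else 0)
       + (if z = Z2 \<and> m + n = 0 then of_int (m ^ 2 + m) else 0)))"
| "hv_br _ _ = (\<lambda>z. 0)"

definition p_basis :: "hv set" where
  "p_basis = range I \<union> {Z1, Z2, Z3}"

definition H_basis :: "hv set" where
  "H_basis = range I \<union> {Z3}"

text \<open>Tensor algebra T(L): finitely supported functions on words in the basis.\<close>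
definition Tfin :: "(hv list \<Rightarrow> complex) set" where
  "Tfin = {f. finite {w. f w \<noteq> 0}}"

definition mono :: "hv list \<Rightarrow> hv list \<Rightarrow> complex" where
  "mono w = (\<lambda>v. if v = w then 1 else 0)"

definition lmul :: "hv \<Rightarrow> (hv list \<Rightarrow> complex) \<Rightarrow> (hv list \<Rightarrow> complex)" where
  "lmul x f = (\<lambda>v. case v of [] \<Rightarrow> 0 | y # w \<Rightarrow> if y = x then f w else 0)"

text \<open>The element a (x y - y x - [x,y]) b of T(L), for words a, b.\<close>
definition relv :: "hv list \<Rightarrow> hv \<Rightarrow> hv \<Rightarrow> hv list \<Rightarrow> (hv list \<Rightarrow> complex)" where
  "relv a x y b = (\<lambda>v. mono (a @ [x, y] @ b) v - mono (a @ [y, x] @ b) v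
     - (if length v = length a + 1 + length b \<and> take (length a) v = a
           \<and> drop (length a + 1) v = b then hv_br x y (v ! length a) else 0))"

text \<open>Kernel of T(L) -> W(phi) = U(L) \<otimes>_{U(p)} C w_phi, i.e. the subspace spanned by the
  two-sided ideal of the commutator relations and the left ideal generated by p - phi(p).\<close>
inductive_set Wker :: "(hv \<Rightarrow> complex) \<Rightarrow> (hv list \<Rightarrow> complex) set" for \<phi> where
  rel: "relv a x y b \<in> Wker \<phi>"
| ind: "p \<in> p_basis \<Longrightarrow> (\<lambda>v. mono (a @ [p]) v - \<phi> p * mono a v) \<in> Wker \<phi>"
| zero: "(\<lambda>v. 0) \<in> Wker \<phi>"
| add: "f \<in> Wker \<phi> \<Longrightarrow> g \<in> Wker \<phi> \<Longrightarrow> (\<lambda>v. f v + g v) \<in> Wker \<phi>"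
| smult: "f \<in> Wker \<phi> \<Longrightarrow> (\<lambda>v. c * f v) \<in> Wker \<phi>"

text \<open>Submodules of W(phi) correspond to L-stable subspaces M of T(L) with Wker \<subseteq> M.
  W(phi) is irreducible iff it is nonzero and has no submodules besides 0 and itself.\<close>
definition W_irreducible :: "(hv \<Rightarrow> complex) \<Rightarrow> bool" where
  "W_irreducible \<phi> \<longleftrightarrow>
     Wker \<phi> \<noteq> Tfin \<and>
     (\<forall>M. Wker \<phi> \<subseteq> M \<and> M \<subseteq> Tfin
          \<and> (\<forall>f\<in>M. \<forall>g\<in>M. (\<lambda>v. f v + g v) \<in> M)
          \<and> (\<forall>f\<in>M. \<forall>c. (\<lambda>v. c * f v) \<in> M)
          \<and> (\<forall>f\<in>M. \<forall>x. lmul x f \<in> M)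
        \<longrightarrow> M = Wker \<phi> \<or> M = Tfin)"

text \<open>phi (given by its values on p_basis) is a Lie algebra homomorphism p -> C,
  i.e. vanishes on [p,p] = C z_3.\<close>
definition p_hom :: "(hv \<Rightarrow> complex) \<Rightarrow> bool" where
  "p_hom \<phi> \<longleftrightarrow> \<phi> Z3 = 0"

definition S_phi :: "(hv \<Rightarrow> complex) \<Rightarrow> int set" where
  "S_phi \<phi> = {n. \<phi> (I n) \<noteq> 0}"

definition finite_hom :: "(hv \<Rightarrow> complex) \<Rightarrow> bool" where
  "finite_hom \<phi> \<longleftrightarrow> p_hom \<phi> \<and> finite (S_phi \<phi>) \<and> \<phi> Z2 = 0"

end

(*
  W(phi) has a PBW basis: the sorted monomials L_i1 ... L_ik w_phi with i1 <= ... <= ik.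
  We construct the action of the basis of L on formal combinations of sorted monomials by
  commuting each generator to the right, prove that it is a representation (the inductive
  argument from the proof of the PBW theorem), and conclude that a word of T(L) lies in the
  kernel of T(L) -> W(phi) exactly when its normal form vanishes.

  If |S^phi| >= 2, choose n0 <> 0 such that the shift n0 + e meets S^phi for exactly one index
  e occurring in the longest monomials of a nonzero vector v. Then (I_n0 - phi(I_n0)) v has
  smaller length; its leading part comes from contracting one factor L_e of a longest monomial
  via [I_n0, L_e] = -n0 I_(n0+e) + ..., and it is nonzero because only the contractions of the
  chosen e survive. Iterating, every nonzero submodule contains w_phi.

  If S^phi = {k}, then L_k w_phi is again an eigenvector of p, so right multiplication by L_k
  is well defined on W(phi); its image U(L) L_k w_phi is a nonzero submodule, and comparing
  longest monomials shows that it does not contain w_phi.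
*)
theory Submission
  imports Defs "HOL-Library.Multiset"
begin

section \<open>Formal linear combinations\<close>

text \<open>A formal linear combination is a list of (coefficient, basis element) pairs; repetitions
  are allowed, only the function \<open>coeff\<close> it represents is meaningful.\<close>
type_synonym 'k lc = "(complex \<times> 'k) list"

definition coeff :: "'k lc \<Rightarrow> 'k \<Rightarrow> complex" where
  "coeff ps r = (\<Sum>(c,n)\<leftarrow>ps. if n = r then c else 0)"

definition lc_scale :: "complex \<Rightarrow> 'k lc \<Rightarrow> 'k lc" where
  "lc_scale a ps = map (\<lambda>(c,n). (a*c, n)) ps"

definition lc_ext :: "('k \<Rightarrow> 'v lc) \<Rightarrow> 'k lc \<Rightarrow> 'v lc" where
  "lc_ext F ps = concat (map (\<lambda>(c,n). lc_scale c (F n)) ps)"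

definition lc_keys :: "'k lc \<Rightarrow> 'k set" where
  "lc_keys ps = snd ` set ps"

definition lc_all :: "('k \<Rightarrow> bool) \<Rightarrow> 'k lc \<Rightarrow> bool" where
  "lc_all P ps \<longleftrightarrow> (\<forall>n\<in>lc_keys ps. P n)"

lemma coeff_Nil [simp]: "coeff [] r = 0"
  by (simp add: coeff_def)

lemma coeff_Cons [simp]: "coeff ((c,n)#ps) r = (if n = r then c else 0) + coeff ps r"
  by (simp add: coeff_def)

lemma coeff_append [simp]: "coeff (ps @ qs) r = coeff ps r + coeff qs r"
  by (simp add: coeff_def)

lemma coeff_lc_scale [simp]: "coeff (lc_scale a ps) r = a * coeff ps r"
  by (induction ps) (auto simp: lc_scale_def algebra_simps)

lemma lc_scale_Nil [simp]: "lc_scale a [] = []"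
  by (simp add: lc_scale_def)

lemma lc_scale_Cons [simp]: "lc_scale a ((c,n)#ps) = (a*c,n) # lc_scale a ps"
  by (simp add: lc_scale_def)

lemma lc_scale_append [simp]: "lc_scale a (ps @ qs) = lc_scale a ps @ lc_scale a qs"
  by (simp add: lc_scale_def)

lemma lc_scale_lc_scale [simp]: "lc_scale a (lc_scale b ps) = lc_scale (a*b) ps"
  by (induction ps) (auto simp: lc_scale_def)

lemma lc_ext_Nil [simp]: "lc_ext F [] = []"
  by (simp add: lc_ext_def)

lemma lc_ext_Cons [simp]: "lc_ext F ((c,n)#ps) = lc_scale c (F n) @ lc_ext F ps"
  by (simp add: lc_ext_def)

lemma lc_ext_append [simp]: "lc_ext F (ps @ qs) = lc_ext F ps @ lc_ext F qs"
  by (simp add: lc_ext_def)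

lemma lc_ext_lc_scale [simp]: "lc_ext F (lc_scale a ps) = lc_scale a (lc_ext F ps)"
  by (induction ps) auto

lemma lc_ext_lc_ext: "lc_ext F (lc_ext G ps) = lc_ext (\<lambda>n. lc_ext F (G n)) ps"
  by (induction ps) auto

lemma lc_ext_cong: "(\<And>c n. (c,n) \<in> set ps \<Longrightarrow> F n = G n) \<Longrightarrow> lc_ext F ps = lc_ext G ps"
  by (induction ps) fastforce+

lemma coeff_lc_ext: "coeff (lc_ext F ps) r = (\<Sum>(c,n)\<leftarrow>ps. c * coeff (F n) r)"
  by (induction ps) auto

lemma lc_keys_Nil [simp]: "lc_keys [] = {}"
  by (simp add: lc_keys_def)

lemma lc_keys_Cons [simp]: "lc_keys ((c,n)#ps) = insert n (lc_keys ps)"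
  by (simp add: lc_keys_def)

lemma finite_lc_keys [simp]: "finite (lc_keys ps)"
  by (simp add: lc_keys_def)

lemma coeff_nonzero_in_keys: "coeff ps r \<noteq> 0 \<Longrightarrow> r \<in> lc_keys ps"
  by (induction ps) (auto split: if_splits)

lemma coeff_lc_ext_sum:
  assumes "finite N" "lc_keys ps \<subseteq> N"
  shows "coeff (lc_ext F ps) r = (\<Sum>n\<in>N. coeff ps n * coeff (F n) r)"
  using assms(2)
proof (induction ps)
  case (Cons p ps)
  obtain c n0 where p: "p = (c,n0)" by force
  have n0: "n0 \<in> N" using Cons.prems p by auto
  have "(\<Sum>n\<in>N. coeff (p#ps) n * coeff (F n) r)
      = (\<Sum>n\<in>N. (if n0 = n then c * coeff (F n) r else 0) + coeff ps n * coeff (F n) r)"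
    by (rule sum.cong) (auto simp: p algebra_simps)
  also have "\<dots> = c * coeff (F n0) r + (\<Sum>n\<in>N. coeff ps n * coeff (F n) r)"
    using n0 assms(1) by (simp add: sum.distrib)
  finally show ?case using Cons p by auto
qed simp

lemma coeff_lc_ext_cong:
  "(\<And>n. coeff ps n = coeff qs n) \<Longrightarrow> coeff (lc_ext F ps) r = coeff (lc_ext F qs) r"
  using coeff_lc_ext_sum[of "lc_keys ps \<union> lc_keys qs" ps F r]
    coeff_lc_ext_sum[of "lc_keys ps \<union> lc_keys qs" qs F r]
  by simp

lemma coeff_lc_ext_cong_fun:
  "(\<And>c n r. (c,n) \<in> set ps \<Longrightarrow> coeff (F n) r = coeff (G n) r) \<Longrightarrow>
    coeff (lc_ext F ps) r = coeff (lc_ext G ps) r"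
  by (induction ps) fastforce+

lemma coeff_lc_ext_add:
  "(\<And>c n r. (c,n) \<in> set ps \<Longrightarrow> coeff (F n) r = coeff (G n) r + coeff (H n) r) \<Longrightarrow>
    coeff (lc_ext F ps) r = coeff (lc_ext G ps) r + coeff (lc_ext H ps) r"
  by (induction ps) (fastforce simp: algebra_simps)+

lemma coeff_lc_ext_swap:
  "coeff (lc_ext (\<lambda>n. lc_ext (\<lambda>a. H a n) ts) ps) r = coeff (lc_ext (\<lambda>a. lc_ext (H a) ps) ts) r"
proof -
  have "coeff (lc_ext (\<lambda>n. lc_ext (\<lambda>a. H a n) ts) ps) r
      = (\<Sum>x\<leftarrow>ps. \<Sum>y\<leftarrow>ts. fst x * (fst y * coeff (H (snd y) (snd x)) r))"
    by (simp add: coeff_lc_ext split_def sum_list_const_mult[symmetric] mult.assoc)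
  also have "\<dots> = (\<Sum>y\<leftarrow>ts. \<Sum>x\<leftarrow>ps. fst x * (fst y * coeff (H (snd y) (snd x)) r))"
    by (induction ps) (auto simp: sum_list_addf)
  also have "\<dots> = coeff (lc_ext (\<lambda>a. lc_ext (H a) ps) ts) r"
    by (simp add: coeff_lc_ext split_def sum_list_const_mult[symmetric] algebra_simps)
  finally show ?thesis .
qed

lemma coeff_eq_0I: "(\<And>c. (c,r) \<in> set ts \<Longrightarrow> c = 0) \<Longrightarrow> coeff ts r = 0"
  by (induction ts) auto

lemma lc_all_Nil [simp]: "lc_all P []"
  by (simp add: lc_all_def)

lemma lc_all_Cons [simp]: "lc_all P ((c,n)#ps) \<longleftrightarrow> P n \<and> lc_all P ps"
  by (simp add: lc_all_def)

lemma lc_all_append [simp]: "lc_all P (ps @ qs) \<longleftrightarrow> lc_all P ps \<and> lc_all P qs"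
  by (auto simp: lc_all_def lc_keys_def)

lemma lc_all_lc_scale [simp]: "lc_all P (lc_scale a ps) \<longleftrightarrow> lc_all P ps"
  by (induction ps) auto

lemma lc_all_tl: "lc_all P ps \<Longrightarrow> lc_all P (tl ps)"
  by (cases ps) (auto simp: lc_all_def lc_keys_def)

lemma lc_all_lc_ext: "(\<And>c n. (c,n) \<in> set ps \<Longrightarrow> lc_all P (F n)) \<Longrightarrow> lc_all P (lc_ext F ps)"
  by (induction ps) fastforce+

lemma lc_all_mono: "lc_all P ps \<Longrightarrow> (\<And>n. P n \<Longrightarrow> Q n) \<Longrightarrow> lc_all Q ps"
  by (auto simp: lc_all_def)

lemma lc_all_mem: "lc_all P ps \<Longrightarrow> (c,n) \<in> set ps \<Longrightarrow> P n"
  by (force simp: lc_all_def lc_keys_def)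

lemma lc_all_keys: "lc_all P ps \<Longrightarrow> n \<in> lc_keys ps \<Longrightarrow> P n"
  by (simp add: lc_all_def)

section \<open>The Lie bracket and the tensor algebra\<close>

fun bracket :: "hv \<Rightarrow> hv \<Rightarrow> hv lc" where
  "bracket (L m) (L n) = [(of_int (n - m), L (m + n))] @ (if n = - m then [(of_int (m^3 - m) / 12, Z1)] else [])"
| "bracket (I m) (I n) = (if n = - m then [(of_int m, Z3)] else [])"
| "bracket (L m) (I n) = [(of_int n, I (m + n))] @ (if n = - m then [(of_int (m^2 + m), Z2)] else [])"
| "bracket (I n) (L m) = [(- of_int n, I (m + n))] @ (if m = - n then [(- of_int (m^2 + m), Z2)] else [])"
| "bracket _ _ = []"

lemma hv_br_eq_coeff_bracket: "hv_br x y z = coeff (bracket x y) z"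
  by (cases x; cases y; cases z) (auto simp: add_eq_0_iff)

lemma coeff_bracket_antisym: "coeff (bracket x y) z = - coeff (bracket y x) z"
  by (cases x; cases y; cases z) (auto simp: field_simps)

text \<open>The Jacobi identity for \<open>x\<close>, \<open>y\<close>, \<open>L\<^sub>k\<close>; the PBW argument only ever commutes past
  the \<open>L\<^sub>k\<close>.\<close>
lemma bracket_jacobi:
  "coeff (lc_ext (\<lambda>a. bracket a y) (bracket x (L k)) @ lc_ext (\<lambda>b. bracket x b) (bracket y (L k))) w
     = coeff (lc_ext (\<lambda>z. bracket z (L k)) (bracket x y)) w"
  by (cases x; cases y; cases w)
    (auto, simp_all add: field_simps, simp_all add: algebra_simps power3_eq_cube power2_eq_square)

definition lc_cons :: "'a \<Rightarrow> 'a list lc \<Rightarrow> 'a list lc" where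
  "lc_cons x ts = map (\<lambda>(c,w). (c, x # w)) ts"

definition lc_snoc :: "'a list lc \<Rightarrow> 'a \<Rightarrow> 'a list lc" where
  "lc_snoc ts x = map (\<lambda>(c,w). (c, w @ [x])) ts"

definition lc_infix :: "'a list \<Rightarrow> 'a lc \<Rightarrow> 'a list \<Rightarrow> 'a list lc" where
  "lc_infix a ts b = map (\<lambda>(c,z). (c, a @ [z] @ b)) ts"

definition rel_lc :: "hv list \<Rightarrow> hv \<Rightarrow> hv \<Rightarrow> hv list \<Rightarrow> hv list lc" where
  "rel_lc a x y b = [(1, a @ [x,y] @ b), (-1, a @ [y,x] @ b)] @ lc_scale (-1) (lc_infix a (bracket x y) b)"

lemma lc_cons_Nil [simp]: "lc_cons x [] = []"
  by (simp add: lc_cons_def)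

lemma lc_cons_Cons [simp]: "lc_cons x ((c,w)#ts) = (c, x#w) # lc_cons x ts"
  by (simp add: lc_cons_def)

lemma lc_cons_append [simp]: "lc_cons x (ts @ us) = lc_cons x ts @ lc_cons x us"
  by (simp add: lc_cons_def)

lemma lc_cons_lc_scale [simp]: "lc_cons x (lc_scale c ts) = lc_scale c (lc_cons x ts)"
  by (induction ts) auto

lemma lc_snoc_Nil [simp]: "lc_snoc [] x = []"
  by (simp add: lc_snoc_def)

lemma lc_snoc_Cons [simp]: "lc_snoc ((c,w)#ts) x = (c, w @ [x]) # lc_snoc ts x"
  by (simp add: lc_snoc_def)

lemma lc_snoc_append [simp]: "lc_snoc (ts @ us) x = lc_snoc ts x @ lc_snoc us x"
  by (simp add: lc_snoc_def)

lemma lc_snoc_lc_scale [simp]: "lc_snoc (lc_scale c ts) x = lc_scale c (lc_snoc ts x)"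
  by (induction ts) auto

lemma lc_snoc_lc_cons: "lc_snoc (lc_cons y ts) x = lc_cons y (lc_snoc ts x)"
  by (induction ts) auto

lemma lc_snoc_rel_lc: "lc_snoc (rel_lc a y z b) x = rel_lc a y z (b @ [x])"
  by (simp add: rel_lc_def lc_snoc_def lc_infix_def lc_scale_def split_def)

lemma lc_cons_rel_lc: "lc_cons x (rel_lc a y z b) = rel_lc (x # a) y z b"
  by (simp add: rel_lc_def lc_cons_def lc_infix_def lc_scale_def split_def)

lemma coeff_lc_snoc: "coeff (lc_snoc ts x) v = (if v \<noteq> [] \<and> last v = x then coeff ts (butlast v) else 0)"
proof (induction ts)
  case (Cons p ts)
  have "(w @ [x] = v) = (v \<noteq> [] \<and> last v = x \<and> butlast v = w)" for w
    by (induction v rule: rev_induct) auto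
  then show ?case using Cons by (cases p) auto
qed simp

lemma coeff_lc_infix:
  "coeff (lc_infix a ts b) v =
   (if length v = length a + 1 + length b \<and> take (length a) v = a \<and> drop (length a + 1) v = b
    then coeff ts (v ! length a) else 0)"
proof (induction ts)
  case (Cons p ts)
  have "(a @ [z] @ b = v) = (length v = length a + 1 + length b \<and> take (length a) v = a
    \<and> drop (length a + 1) v = b \<and> v ! length a = z)" for z
  proof
    assume "length v = length a + 1 + length b \<and> take (length a) v = a
      \<and> drop (length a + 1) v = b \<and> v ! length a = z"
    moreover from this have "v = take (length a) v @ v ! length a # drop (Suc (length a)) v"
      by (intro id_take_nth_drop) simp
    ultimately show "a @ [z] @ b = v" by simp
  qed auto
  then show ?case using Cons by (cases p) (auto simp: lc_infix_def)
qed (simp add: lc_infix_def)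

lemma relv_eq_coeff: "relv a x y b = coeff (rel_lc a x y b)"
  unfolding relv_def rel_lc_def mono_def fun_eq_iff
  by (simp add: coeff_lc_infix hv_br_eq_coeff_bracket eq_commute[of _ "a @ _"])

lemma mono_eq_coeff: "mono w = coeff [(1,w)]"
  by (auto simp: mono_def fun_eq_iff)

lemma lmul_coeff: "lmul x (coeff ts) = coeff (lc_cons x ts)"
proof
  fix v
  show "lmul x (coeff ts) v = coeff (lc_cons x ts) v"
  proof (induction ts)
    case (Cons p ts)
    then show ?case by (cases p) (auto simp: lmul_def split: list.split)
  qed (simp add: lmul_def split: list.split)
qed

lemma coeff_in_Tfin: "coeff ts \<in> Tfin"
proof -
  have "{v. coeff ts v \<noteq> 0} \<subseteq> lc_keys ts"
    using coeff_nonzero_in_keys by auto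
  then show ?thesis
    unfolding Tfin_def by (simp add: finite_subset)
qed

lemma Tfin_obtain_lc:
  assumes "f \<in> Tfin"
  obtains ts where "f = coeff ts"
proof -
  have "finite {w. f w \<noteq> 0}"
    using assms by (simp add: Tfin_def)
  then obtain xs where xs: "set xs = {w. f w \<noteq> 0}" "distinct xs"
    using finite_distinct_list by blast
  have "coeff (map (\<lambda>w. (f w, w)) xs) v = f v" for v
  proof -
    have "coeff (map (\<lambda>w. (f w, w)) xs) v = (\<Sum>w\<in>set xs. if w = v then f w else 0)"
      using xs(2) by (simp add: coeff_def comp_def sum_list_distinct_conv_sum_set)
    also have "\<dots> = f v"
      using xs(1) sum.delta[OF finite_set[of xs], of v f] by (cases "f v = 0") auto
    finally show ?thesis .
  qed
  then show thesis
    by (intro that[of "map (\<lambda>w. (f w, w)) xs"]) auto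
qed

definition W_submodule :: "(hv \<Rightarrow> complex) \<Rightarrow> (hv list \<Rightarrow> complex) set \<Rightarrow> bool" where
  "W_submodule \<phi> M \<longleftrightarrow> Wker \<phi> \<subseteq> M \<and> M \<subseteq> Tfin
     \<and> (\<forall>f\<in>M. \<forall>g\<in>M. (\<lambda>v. f v + g v) \<in> M)
     \<and> (\<forall>f\<in>M. \<forall>c. (\<lambda>v. c * f v) \<in> M)
     \<and> (\<forall>f\<in>M. \<forall>x. lmul x f \<in> M)"

lemma W_irreducible_iff:
  "W_irreducible \<phi> \<longleftrightarrow> Wker \<phi> \<noteq> Tfin \<and> (\<forall>M. W_submodule \<phi> M \<longrightarrow> M = Wker \<phi> \<or> M = Tfin)"
  by (simp add: W_irreducible_def W_submodule_def)

lemma W_submodule_append: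
  assumes "W_submodule \<phi> M" "coeff ts \<in> M" "coeff us \<in> M"
  shows "coeff (ts @ us) \<in> M"
proof -
  have "(\<lambda>v. coeff ts v + coeff us v) \<in> M"
    using assms unfolding W_submodule_def by blast
  moreover have "coeff (ts @ us) = (\<lambda>v. coeff ts v + coeff us v)" by auto
  ultimately show ?thesis by simp
qed

lemma W_submodule_lc_scale:
  assumes "W_submodule \<phi> M" "coeff ts \<in> M"
  shows "coeff (lc_scale c ts) \<in> M"
proof -
  have "(\<lambda>v. c * coeff ts v) \<in> M"
    using assms unfolding W_submodule_def by blast
  moreover have "coeff (lc_scale c ts) = (\<lambda>v. c * coeff ts v)" by auto
  ultimately show ?thesis by simp
qed

lemma W_submodule_lc_cons:
  assumes "W_submodule \<phi> M" "coeff ts \<in> M"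
  shows "coeff (lc_cons x ts) \<in> M"
  using assms unfolding W_submodule_def by (simp flip: lmul_coeff)

section \<open>The action on PBW monomials\<close>

locale W_model =
  fixes \<phi> :: "hv \<Rightarrow> complex"
  assumes \<phi>_Z3: "\<phi> Z3 = 0" and \<phi>_Z2: "\<phi> Z2 = 0"
begin

text \<open>A sorted list \<open>[i\<^sub>1, \<dots>, i\<^sub>k]\<close> stands for the PBW monomial
  \<open>L\<^sub>i\<^sub>1 \<cdots> L\<^sub>i\<^sub>k w\<^sub>\<phi>\<close>; these form a basis of \<open>W(\<phi>)\<close>.
  \<open>act_fuel d x m\<close> expands \<open>x \<cdot> m\<close> in that basis by commuting \<open>x\<close> to the right.
  The recursion is nested (\<open>L\<^sub>j\<close> acts on the result of a recursive call), so it is made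
  structural by a fuel parameter \<open>d \<ge> length m\<close>.\<close>
primrec act_fuel :: "nat \<Rightarrow> hv \<Rightarrow> int list \<Rightarrow> int list lc" where
  "act_fuel 0 x m = (case x of L i \<Rightarrow> (if m = [] then [(1,[i])] else [])
      | I n \<Rightarrow> (if m = [] then [(\<phi> (I n), [])] else []) | _ \<Rightarrow> [(\<phi> x, m)])"
| "act_fuel (Suc d) x m = (case x of
      L i \<Rightarrow> (case m of [] \<Rightarrow> [(1,[i])] | j # m' \<Rightarrow>
         (if i \<le> j then [(1, i#m)] else
            (1, j # insort i m') # lc_ext (act_fuel d (L j)) (tl (act_fuel d (L i) m'))
            @ lc_scale (of_int (j-i)) (act_fuel d (L (i+j)) m')
            @ (if j = -i then [(of_int (i^3-i)/12 * \<phi> Z1, m')] else [])))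
    | I n \<Rightarrow> (case m of [] \<Rightarrow> [(\<phi> (I n), [])] | j # m' \<Rightarrow>
         lc_ext (act_fuel d (L j)) (act_fuel d (I n) m') @ lc_scale (- of_int n) (act_fuel d (I (j+n)) m')
            @ (if j = -n then [(- of_int (j^2+j) * \<phi> Z2, m')] else []))
    | _ \<Rightarrow> [(\<phi> x, m)])"

lemma act_fuel_L_Nil [simp]: "act_fuel d (L i) [] = [(1,[i])]"
  by (cases d) simp_all

lemma act_fuel_I_Nil [simp]: "act_fuel d (I n) [] = [(\<phi> (I n), [])]"
  by (cases d) simp_all

lemma act_fuel_Z [simp]:
  "act_fuel d Z1 m = [(\<phi> Z1, m)]" "act_fuel d Z2 m = [(\<phi> Z2, m)]" "act_fuel d Z3 m = [(\<phi> Z3, m)]"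
  by (cases d; simp)+

lemma act_fuel_Suc_L_Cons [simp]:
  "act_fuel (Suc d) (L i) (j#m) = (if i \<le> j then [(1, i#j#m)] else
     (1, j # insort i m) # lc_ext (act_fuel d (L j)) (tl (act_fuel d (L i) m))
     @ lc_scale (of_int (j-i)) (act_fuel d (L (i+j)) m)
     @ (if j = -i then [(of_int (i^3-i)/12 * \<phi> Z1, m)] else []))"
  by simp

lemma act_fuel_Suc_I_Cons [simp]:
  "act_fuel (Suc d) (I n) (j#m) = lc_ext (act_fuel d (L j)) (act_fuel d (I n) m)
     @ lc_scale (- of_int n) (act_fuel d (I (j+n)) m)
     @ (if j = -n then [(- of_int (j^2+j) * \<phi> Z2, m)] else [])"
  by simp

declare act_fuel.simps [simp del]

definition act_shape :: "hv \<Rightarrow> int list \<Rightarrow> int list lc \<Rightarrow> bool" where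
  "act_shape x m ps \<longleftrightarrow> (case x of
      L i \<Rightarrow> ps = (1, insort i m) # tl ps \<and> lc_all (\<lambda>n. length n \<le> length m) (tl ps)
    | _ \<Rightarrow> lc_all (\<lambda>n. length n \<le> length m) ps)"

lemma act_shape_L_length: "act_shape (L i) m ps \<Longrightarrow> lc_all (\<lambda>n. length n \<le> Suc (length m)) ps"
proof -
  assume "act_shape (L i) m ps"
  then have ps: "ps = (1, insort i m) # tl ps" and tl: "lc_all (\<lambda>n. length n \<le> length m) (tl ps)"
    by (simp_all add: act_shape_def)
  from tl have "lc_all (\<lambda>n. length n \<le> Suc (length m)) (tl ps)"
    by (rule lc_all_mono) simp
  then show ?thesis by (subst ps) simp
qed

lemma act_fuel_shape_L_step:
  assumes IH: "\<And>x n. length n \<le> d \<Longrightarrow> act_shape x n (act_fuel d x n)" and len: "length m \<le> d"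
  shows "act_shape (L i) (j # m) (act_fuel (Suc d) (L i) (j # m))"
proof (cases "i \<le> j")
  case False
  have tl: "lc_all (\<lambda>n. length n \<le> length m) (tl (act_fuel d (L i) m))"
    using IH[OF len, of "L i"] by (simp add: act_shape_def)
  have "lc_all (\<lambda>n. length n \<le> Suc (length m)) (lc_ext (act_fuel d (L j)) (tl (act_fuel d (L i) m)))"
  proof (rule lc_all_lc_ext)
    fix c n assume "(c,n) \<in> set (tl (act_fuel d (L i) m))"
    then have "length n \<le> length m" using tl by (rule lc_all_mem[rotated])
    then show "lc_all (\<lambda>r. length r \<le> Suc (length m)) (act_fuel d (L j) n)"
      using act_shape_L_length[OF IH[of n "L j"]] len by (fastforce simp: lc_all_def)
  qed
  moreover have "lc_all (\<lambda>n. length n \<le> Suc (length m)) (act_fuel d (L (i+j)) m)"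
    by (rule act_shape_L_length[OF IH[OF len]])
  ultimately show ?thesis
    using False by (simp add: act_shape_def)
qed (simp add: act_shape_def)

lemma act_fuel_shape_I_step:
  assumes IH: "\<And>x n. length n \<le> d \<Longrightarrow> act_shape x n (act_fuel d x n)" and len: "length m \<le> d"
  shows "act_shape (I k) (j # m) (act_fuel (Suc d) (I k) (j # m))"
proof -
  have I_len: "lc_all (\<lambda>n. length n \<le> length m) (act_fuel d (I k') m)" for k'
    using IH[OF len, of "I k'"] by (simp add: act_shape_def)
  have "lc_all (\<lambda>n. length n \<le> Suc (length m)) (lc_ext (act_fuel d (L j)) (act_fuel d (I k) m))"
  proof (rule lc_all_lc_ext)
    fix c n assume "(c,n) \<in> set (act_fuel d (I k) m)"
    then have "length n \<le> length m" using I_len by (rule lc_all_mem[rotated])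
    then show "lc_all (\<lambda>r. length r \<le> Suc (length m)) (act_fuel d (L j) n)"
      using act_shape_L_length[OF IH[of n "L j"]] len by (fastforce simp: lc_all_def)
  qed
  moreover have "lc_all (\<lambda>n. length n \<le> Suc (length m)) (act_fuel d (I (j+k)) m)"
    using I_len by (rule lc_all_mono) simp
  ultimately show ?thesis
    by (simp add: act_shape_def)
qed

lemma act_fuel_shape: "length m \<le> d \<Longrightarrow> act_shape x m (act_fuel d x m)"
proof (induction d arbitrary: x m)
  case 0
  then show ?case by (cases x) (simp_all add: act_shape_def)
next
  case (Suc d)
  show ?case
  proof (cases m)
    case Nil
    then show ?thesis by (cases x) (simp_all add: act_shape_def)
  next
    case (Cons j m')
    then have "length m' \<le> d" using Suc.prems by simp
    then show ?thesis
      using Cons act_fuel_shape_L_step[OF Suc.IH] act_fuel_shape_I_step[OF Suc.IH]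
      by (cases x) (simp_all add: act_shape_def)
  qed
qed

lemma act_fuel_Suc: "length m \<le> d \<Longrightarrow> act_fuel (Suc d) x m = act_fuel d x m"
proof (induction d arbitrary: x m)
  case 0
  then show ?case by (cases x) simp_all
next
  case (Suc d)
  show ?case
  proof (cases m)
    case Nil
    then show ?thesis by (cases x) simp_all
  next
    case (Cons j m')
    have len: "length m' \<le> d" using Suc.prems Cons by simp
    have short: "act_fuel (Suc d) (L j) n = act_fuel d (L j) n"
      if "(c,n) \<in> set ps" "lc_all (\<lambda>n. length n \<le> length m') ps" for c n ps
      using Suc.IH len lc_all_mem[OF that(2,1)] by simp
    have "lc_all (\<lambda>n. length n \<le> length m') (tl (act_fuel d (L i) m'))"
         "lc_all (\<lambda>n. length n \<le> length m') (act_fuel d (I k) m')" for i k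
      using act_fuel_shape[OF len, of "L i"] act_fuel_shape[OF len, of "I k"]
      by (simp_all add: act_shape_def)
    then show ?thesis
      using Cons Suc.IH[OF len] short by (cases x) (auto intro: lc_ext_cong)
  qed
qed

definition act :: "hv \<Rightarrow> int list \<Rightarrow> int list lc" where
  "act x m = act_fuel (length m) x m"

definition act_lc :: "hv \<Rightarrow> int list lc \<Rightarrow> int list lc" where
  "act_lc x ps = lc_ext (act x) ps"

definition act_bracket :: "hv \<Rightarrow> hv \<Rightarrow> int list \<Rightarrow> int list lc" where
  "act_bracket x y m = lc_ext (\<lambda>a. act a m) (bracket x y)"

lemma act_fuel_eq_act: "length m \<le> d \<Longrightarrow> act_fuel d x m = act x m"
  by (induction d) (auto simp: act_def act_fuel_Suc le_Suc_eq)

lemma act_shape: "act_shape x m (act x m)"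
  unfolding act_def by (rule act_fuel_shape) simp

lemma act_L_leading: "act (L i) m = (1, insort i m) # tl (act (L i) m)"
  using act_shape[of "L i" m] by (simp add: act_shape_def)

lemma act_L_tl_length: "lc_all (\<lambda>r. length r \<le> length m) (tl (act (L i) m))"
  using act_shape[of "L i" m] by (simp add: act_shape_def)

lemma act_L_length: "lc_all (\<lambda>r. length r \<le> Suc (length m)) (act (L i) m)"
  by (rule act_shape_L_length[OF act_shape])

lemma act_non_L_length: "x \<notin> range L \<Longrightarrow> lc_all (\<lambda>r. length r \<le> length m) (act x m)"
  using act_shape[of x m] by (cases x) (auto simp: act_shape_def)

lemma act_L_Nil [simp]: "act (L i) [] = [(1,[i])]"
  by (simp add: act_def)

lemma act_I_Nil [simp]: "act (I n) [] = [(\<phi> (I n), [])]"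
  by (simp add: act_def)

lemma act_non_L_Nil: "x \<notin> range L \<Longrightarrow> act x [] = [(\<phi> x, [])]"
  by (cases x) (auto simp: act_def)

lemma act_Z [simp]: "act Z1 m = [(\<phi> Z1, m)]" "act Z2 m = [(\<phi> Z2, m)]" "act Z3 m = [(\<phi> Z3, m)]"
  by (simp_all add: act_def)

lemma act_L_Cons: "act (L i) (j#m) = (if i \<le> j then [(1, i#j#m)] else
     (1, j # insort i m) # act_lc (L j) (tl (act (L i) m))
     @ lc_scale (of_int (j-i)) (act (L (i+j)) m)
     @ (if j = -i then [(of_int (i^3-i)/12 * \<phi> Z1, m)] else []))"
proof -
  have "lc_ext (act_fuel (length m) (L j)) (tl (act (L i) m)) = act_lc (L j) (tl (act (L i) m))"
    unfolding act_lc_def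
    by (rule lc_ext_cong) (use act_fuel_eq_act lc_all_mem[OF act_L_tl_length] in blast)
  then show ?thesis
    by (simp add: act_def[of _ "j#m"]) (simp add: act_def)
qed

lemma act_I_Cons: "act (I n) (j#m) = act_lc (L j) (act (I n) m)
     @ lc_scale (- of_int n) (act (I (j+n)) m)
     @ (if j = -n then [(- of_int (j^2+j) * \<phi> Z2, m)] else [])"
proof -
  have "lc_ext (act_fuel (length m) (L j)) (act (I n) m) = act_lc (L j) (act (I n) m)"
    unfolding act_lc_def
    by (rule lc_ext_cong) (use act_fuel_eq_act lc_all_mem[OF act_non_L_length] in blast)
  then show ?thesis
    by (simp add: act_def[of _ "j#m"]) (simp add: act_def)
qed

lemma act_lc_Nil [simp]: "act_lc x [] = []"
  by (simp add: act_lc_def)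

lemma act_lc_Cons: "act_lc x ((c,n)#ps) = lc_scale c (act x n) @ act_lc x ps"
  by (simp add: act_lc_def)

lemma act_lc_append [simp]: "act_lc x (ps @ qs) = act_lc x ps @ act_lc x qs"
  by (simp add: act_lc_def)

lemma act_lc_lc_scale [simp]: "act_lc x (lc_scale a ps) = lc_scale a (act_lc x ps)"
  by (simp add: act_lc_def)

lemma coeff_act_lc_cong: "(\<And>n. coeff ps n = coeff qs n) \<Longrightarrow> coeff (act_lc x ps) r = coeff (act_lc x qs) r"
  unfolding act_lc_def by (rule coeff_lc_ext_cong)

lemma act_sorted: "sorted m \<Longrightarrow> lc_all sorted (act x m)"
proof (induction "length m" arbitrary: x m rule: less_induct)
  case less
  show ?case
  proof (cases m)
    case Nil
    then show ?thesis by (cases x) simp_all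
  next
    case (Cons j m')
    have IH: "lc_all sorted (act y m')" for y
      using less Cons by simp
    have IH_L: "lc_all sorted (act_lc (L j) ps)" if "lc_all (\<lambda>n. sorted n \<and> length n \<le> length m') ps" for ps
      unfolding act_lc_def
    proof (rule lc_all_lc_ext)
      fix c n assume "(c,n) \<in> set ps"
      then have "sorted n \<and> length n \<le> length m'" by (rule lc_all_mem[OF that])
      then have "sorted n" "length n < length m" using Cons by auto
      then show "lc_all sorted (act (L j) n)" using less.hyps by blast
    qed
    have tl_L: "lc_all (\<lambda>n. sorted n \<and> length n \<le> length m') (tl (act (L i) m'))" for i
      using lc_all_tl[OF IH] act_L_tl_length by (auto simp: lc_all_def)
    have I: "lc_all (\<lambda>n. sorted n \<and> length n \<le> length m') (act (I k) m')" for k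
      using IH[of "I k"] act_non_L_length[of "I k" m'] by (auto simp: lc_all_def)
    have "\<forall>e\<in>set m'. j \<le> e" "sorted m'" using less.prems Cons by auto
    then show ?thesis
      using Cons IH IH_L tl_L I
      by (cases x) (auto simp: act_L_Cons act_I_Cons sorted_insort set_insort_key order_trans)
  qed
qed

lemma act_lc_sorted: "lc_all sorted ps \<Longrightarrow> lc_all sorted (act_lc x ps)"
  unfolding act_lc_def by (rule lc_all_lc_ext) (rule act_sorted, rule lc_all_mem)

end
section \<open>The action is a representation\<close>

context W_model
begin

lemma act_L_lowest: "\<forall>e\<in>set n. j \<le> e \<Longrightarrow> act (L j) n = [(1, j#n)]"
  by (cases n) (auto simp: act_L_Cons)

lemma act_Cons_lowest:
  assumes "sorted m" and low: "\<forall>e\<in>set m. j \<le> e"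
  shows "coeff (act x (j#m)) r = coeff (act_lc (L j) (act x m) @ act_bracket x (L j) m) r"
proof (cases x)
  case (L i)
  show ?thesis
  proof (cases "i \<le> j")
    case False
    then have "\<forall>e\<in>set (insort i m). j \<le> e" using low by (auto simp: set_insort_key)
    then have "act_lc (L j) (act (L i) m) = [(1, j # insort i m)] @ act_lc (L j) (tl (act (L i) m))"
      by (subst act_L_leading) (simp add: act_lc_Cons act_L_lowest)
    then show ?thesis using False L by (simp add: act_L_Cons act_bracket_def)
  next
    case True
    then have "\<forall>e\<in>set m. i \<le> e" using low by fastforce
    then have Li: "act (L i) m = [(1, i#m)]" by (rule act_L_lowest)
    show ?thesis
    proof (cases "i = j")
      case False
      then have "i < j" using True by simp
      then have "act (L j) (i#m) = (1, i # j # m) # lc_scale (of_int (i-j)) (act (L (i+j)) m)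
            @ (if i = -j then [(of_int (j^3-j)/12 * \<phi> Z1, m)] else [])"
        using low by (simp add: act_L_Cons act_L_lowest insort_is_Cons add.commute)
      then show ?thesis
        using L Li \<open>i < j\<close> True
        by (cases "j = -i") (auto simp: act_L_Cons act_bracket_def act_lc_Cons algebra_simps
            simp flip: add_divide_distrib)
    qed (use L low in \<open>simp add: act_L_Cons act_bracket_def act_lc_Cons act_L_lowest\<close>)
  qed
qed (use low in \<open>simp_all add: act_I_Cons act_bracket_def act_lc_Cons act_L_lowest\<close>)

lemma act_lc_act_L_lowest:
  assumes "sorted m" and "\<forall>e\<in>set m. j \<le> e"
  shows "coeff (act_lc x (act (L j) m)) r = coeff (act_lc (L j) (act x m) @ act_bracket x (L j) m) r"
  using act_Cons_lowest[OF assms, of x r] by (simp add: act_L_lowest[OF assms(2)] act_lc_Cons)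

lemma coeff_act_bracket_antisym: "coeff (act_bracket x y m) r = - coeff (act_bracket y x m) r"
proof -
  let ?N = "lc_keys (bracket x y) \<union> lc_keys (bracket y x)"
  have "coeff (act_bracket x y m) r = (\<Sum>n\<in>?N. coeff (bracket x y) n * coeff (act n m) r)"
    unfolding act_bracket_def by (rule coeff_lc_ext_sum) auto
  also have "\<dots> = - (\<Sum>n\<in>?N. coeff (bracket y x) n * coeff (act n m) r)"
    by (simp add: coeff_bracket_antisym[of x y] sum_negf)
  also have "\<dots> = - coeff (act_bracket y x m) r"
    unfolding act_bracket_def by (subst coeff_lc_ext_sum[of ?N]) auto
  finally show ?thesis .
qed

text \<open>This is where \<open>\<phi>(z\<^sub>3) = 0\<close> is needed: \<open>[I\<^sub>n, I\<^sub>-\<^sub>n] = n z\<^sub>3\<close> must act by zero on \<open>w\<^sub>\<phi>\<close>.\<close>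
lemma act_bracket_vacuum:
  "x \<notin> range L \<Longrightarrow> y \<notin> range L \<Longrightarrow> coeff (act_bracket x y []) r = 0"
  by (cases x; cases y) (auto simp: act_bracket_def \<phi>_Z3)

lemma act_keys_above_or_shorter:
  assumes "sorted (k#m)" and v: "\<not> (\<exists>i. y = L i \<and> i \<le> k)"
  shows "lc_all (\<lambda>n. (\<forall>e\<in>set n. k \<le> e) \<or> length n \<le> length m) (act y m)"
proof (cases "y \<in> range L")
  case True
  then obtain i where y: "y = L i" and "k < i" using v by force
  then have "\<forall>e\<in>set (insort i m). k \<le> e" using assms(1) by (auto simp: set_insort_key)
  moreover have "lc_all (\<lambda>n. (\<forall>e\<in>set n. k \<le> e) \<or> length n \<le> length m) (tl (act (L i) m))"
    using act_L_tl_length by (rule lc_all_mono) simp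
  ultimately show ?thesis unfolding y by (subst act_L_leading) simp
next
  case False
  show ?thesis using act_non_L_length[OF False] by (rule lc_all_mono) simp
qed

lemma act_bracket_Cons_lowest:
  assumes "sorted m" and "\<forall>e\<in>set m. k \<le> e"
  shows "coeff (act_bracket x y (k#m)) r
    = coeff (act_lc (L k) (act_bracket x y m)) r + coeff (lc_ext (\<lambda>z. act_bracket z (L k) m) (bracket x y)) r"
proof -
  have "coeff (act_bracket x y (k#m)) r
      = coeff (lc_ext (\<lambda>z. act_lc (L k) (act z m) @ act_bracket z (L k) m) (bracket x y)) r"
    unfolding act_bracket_def[of x y] by (rule coeff_lc_ext_cong_fun) (simp add: act_Cons_lowest[OF assms])
  then show ?thesis
    by (simp add: coeff_lc_ext_add act_lc_def act_bracket_def lc_ext_lc_ext)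
qed

lemma act_bracket_jacobi:
  "coeff (lc_ext (\<lambda>a. act_bracket a y m) (bracket x (L k))) r
     + coeff (lc_ext (\<lambda>b. act_bracket x b m) (bracket y (L k))) r
   = coeff (lc_ext (\<lambda>z. act_bracket z (L k) m) (bracket x y)) r"
proof -
  have "coeff (lc_ext (\<lambda>a. act_bracket a y m) (bracket x (L k))) r
      + coeff (lc_ext (\<lambda>b. act_bracket x b m) (bracket y (L k))) r
    = coeff (lc_ext (\<lambda>w. act w m)
        (lc_ext (\<lambda>a. bracket a y) (bracket x (L k)) @ lc_ext (\<lambda>b. bracket x b) (bracket y (L k)))) r"
    by (simp add: act_bracket_def lc_ext_lc_ext)
  also have "\<dots> = coeff (lc_ext (\<lambda>w. act w m) (lc_ext (\<lambda>z. bracket z (L k)) (bracket x y))) r"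
    by (rule coeff_lc_ext_cong) (rule bracket_jacobi)
  finally show ?thesis
    by (simp add: act_bracket_def lc_ext_lc_ext)
qed

end
context W_model
begin

abbreviation commutes_at :: "int list \<Rightarrow> hv \<Rightarrow> hv \<Rightarrow> bool" where
  "commutes_at m x y \<equiv>
     \<forall>r. coeff (act_lc x (act y m)) r = coeff (act_lc y (act x m)) r + coeff (act_bracket x y m) r"

lemma act_commutator_expand:
  assumes IH: "\<And>n x y. length n \<le> length m \<Longrightarrow> sorted n \<Longrightarrow> commutes_at n x y"
    and sorted: "sorted (k#m)" and v: "\<not> (\<exists>i. v = L i \<and> i \<le> k)"
  shows "coeff (act_lc u (act v (k#m))) r = coeff (act_lc (L k) (act_lc u (act v m))) r
    + coeff (lc_ext (\<lambda>a. act_lc a (act v m)) (bracket u (L k))) r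
    + coeff (lc_ext (\<lambda>b. act_lc u (act b m)) (bracket v (L k))) r"
proof -
  have m: "sorted m" "\<forall>e\<in>set m. k \<le> e" using sorted by auto
  have "coeff (act_lc u (act v (k#m))) r = coeff (act_lc u (act_lc (L k) (act v m) @ act_bracket v (L k) m)) r"
    by (rule coeff_act_lc_cong) (rule act_Cons_lowest[OF m])
  also have "\<dots> = coeff (lc_ext (\<lambda>n. act_lc u (act (L k) n)) (act v m)) r
      + coeff (lc_ext (\<lambda>b. act_lc u (act b m)) (bracket v (L k))) r"
    by (simp add: act_lc_def act_bracket_def lc_ext_lc_ext)
  also have "coeff (lc_ext (\<lambda>n. act_lc u (act (L k) n)) (act v m)) r
      = coeff (act_lc (L k) (act_lc u (act v m))) r + coeff (lc_ext (act_bracket u (L k)) (act v m)) r"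
  proof -
    have "coeff (act_lc u (act (L k) n)) r' = coeff (act_lc (L k) (act u n)) r' + coeff (act_bracket u (L k) n) r'"
      if "(c,n) \<in> set (act v m)" for c n r'
    proof -
      have "sorted n" using act_sorted[OF m(1)] that by (rule lc_all_mem)
      have "(\<forall>e\<in>set n. k \<le> e) \<or> length n \<le> length m"
        using act_keys_above_or_shorter[OF sorted v] that by (rule lc_all_mem)
      then show ?thesis
      proof
        assume "\<forall>e\<in>set n. k \<le> e"
        then show ?thesis using act_lc_act_L_lowest[OF \<open>sorted n\<close>] by simp
      next
        assume "length n \<le> length m"
        then show ?thesis using IH \<open>sorted n\<close> by blast
      qed
    qed
    then have "coeff (lc_ext (\<lambda>n. act_lc u (act (L k) n)) (act v m)) r
      = coeff (lc_ext (\<lambda>n. act_lc (L k) (act u n)) (act v m)) r + coeff (lc_ext (act_bracket u (L k)) (act v m)) r"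
      by (rule coeff_lc_ext_add)
    then show ?thesis
      by (simp add: act_lc_def lc_ext_lc_ext)
  qed
  also have "coeff (lc_ext (act_bracket u (L k)) (act v m)) r
      = coeff (lc_ext (\<lambda>a. act_lc a (act v m)) (bracket u (L k))) r"
    unfolding act_bracket_def act_lc_def by (rule coeff_lc_ext_swap)
  finally show ?thesis by simp
qed

lemma act_commutator_Cons:
  assumes IH: "\<And>n x y. length n \<le> length m \<Longrightarrow> sorted n \<Longrightarrow> commutes_at n x y"
    and sorted: "sorted (k#m)"
    and x: "\<not> (\<exists>i. x = L i \<and> i \<le> k)" and y: "\<not> (\<exists>i. y = L i \<and> i \<le> k)"
  shows "commutes_at (k#m) x y"
proof
  fix r
  have m: "sorted m" "\<forall>e\<in>set m. k \<le> e" using sorted by auto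
  let ?b1 = "coeff (act_lc (L k) (act_lc y (act x m))) r"
  let ?c1 = "coeff (act_lc (L k) (act_bracket x y m)) r"
  let ?b2 = "coeff (lc_ext (\<lambda>a. act_lc y (act a m)) (bracket x (L k))) r"
  let ?c2 = "coeff (lc_ext (\<lambda>a. act_bracket a y m) (bracket x (L k))) r"
  let ?b3 = "coeff (lc_ext (\<lambda>b. act_lc b (act x m)) (bracket y (L k))) r"
  let ?c3 = "coeff (lc_ext (\<lambda>b. act_bracket x b m) (bracket y (L k))) r"
  have "coeff (act_lc (L k) (act_lc x (act y m))) r = ?b1 + ?c1"
  proof -
    have "coeff (act_lc (L k) (act_lc x (act y m))) r
        = coeff (act_lc (L k) (act_lc y (act x m) @ act_bracket x y m)) r"
      by (rule coeff_act_lc_cong) (use IH[of m x y, OF order_refl m(1)] in simp)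
    then show ?thesis by simp
  qed
  moreover have "coeff (lc_ext (\<lambda>a. act_lc a (act y m)) (bracket x (L k))) r = ?b2 + ?c2"
    by (rule coeff_lc_ext_add) (use IH[of m, OF order_refl m(1)] in blast)
  moreover have "coeff (lc_ext (\<lambda>b. act_lc x (act b m)) (bracket y (L k))) r = ?b3 + ?c3"
    by (rule coeff_lc_ext_add) (use IH[of m, OF order_refl m(1)] in blast)
  ultimately have "coeff (act_lc x (act y (k#m))) r = (?b1 + ?b3 + ?b2) + (?c1 + (?c2 + ?c3))"
    using act_commutator_expand[OF IH sorted y, of x r] by (simp add: algebra_simps)
  also have "\<dots> = coeff (act_lc y (act x (k#m))) r + coeff (act_bracket x y (k#m)) r"
    using act_commutator_expand[OF IH sorted x, of y r] act_bracket_Cons_lowest[OF m, of x y r]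
      act_bracket_jacobi[of y m x k r]
    by simp
  finally show "coeff (act_lc x (act y (k#m))) r
    = coeff (act_lc y (act x (k#m))) r + coeff (act_bracket x y (k#m)) r" .
qed

lemma act_commutator: "sorted m \<Longrightarrow> commutes_at m x y"
proof (induction "length m" arbitrary: m x y rule: less_induct)
  case less
  show ?case
  proof (cases "\<exists>j. y = L j \<and> (\<forall>e\<in>set m. j \<le> e)")
    case True
    then show ?thesis using act_lc_act_L_lowest[OF less.prems] by auto
  next
    case not_y: False
    show ?thesis
    proof (cases "\<exists>i. x = L i \<and> (\<forall>e\<in>set m. i \<le> e)")
      case True
      then show ?thesis
        using act_lc_act_L_lowest[OF less.prems] coeff_act_bracket_antisym[of y x m] by auto
    next
      case not_x: False
      show ?thesis
      proof (cases m)
        case Nil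
        then have "x \<notin> range L" "y \<notin> range L" using not_x not_y by auto
        then show ?thesis
          using Nil by (simp add: act_non_L_Nil act_lc_Cons act_bracket_vacuum algebra_simps)
      next
        case (Cons k m')
        have IH: "commutes_at n x y" if "length n \<le> length m'" "sorted n" for n x y
        proof -
          have "length n < length m" using that(1) Cons by simp
          then show ?thesis using less.hyps that(2) by blast
        qed
        have low: "\<not> (\<exists>i. z = L i \<and> i \<le> k)" if "\<not> (\<exists>i. z = L i \<and> (\<forall>e\<in>set m. i \<le> e))" for z
          using that less.prems Cons by force
        show ?thesis
          using act_commutator_Cons[OF IH _ low low] less.prems not_x not_y Cons by blast
      qed
    qed
  qed
qed

lemma act_lc_commutator:
  assumes "lc_all sorted ps"
  shows "coeff (act_lc x (act_lc y ps)) r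
    = coeff (act_lc y (act_lc x ps)) r + coeff (lc_ext (\<lambda>z. act_lc z ps) (bracket x y)) r"
proof -
  have "coeff (act_lc x (act_lc y ps)) r = coeff (lc_ext (\<lambda>n. act_lc x (act y n)) ps) r"
    by (simp add: act_lc_def lc_ext_lc_ext)
  also have "\<dots> = coeff (lc_ext (\<lambda>n. act_lc y (act x n)) ps) r + coeff (lc_ext (act_bracket x y) ps) r"
    by (rule coeff_lc_ext_add) (use act_commutator lc_all_mem[OF assms] in blast)
  also have "coeff (lc_ext (\<lambda>n. act_lc y (act x n)) ps) r = coeff (act_lc y (act_lc x ps)) r"
    by (simp add: act_lc_def lc_ext_lc_ext)
  also have "coeff (lc_ext (act_bracket x y) ps) r = coeff (lc_ext (\<lambda>z. act_lc z ps) (bracket x y)) r"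
    unfolding act_bracket_def act_lc_def by (rule coeff_lc_ext_swap)
  finally show ?thesis .
qed

end
section \<open>The kernel of \<open>T(L) \<rightarrow> W(\<phi>)\<close>\<close>

definition L_words :: "int list lc \<Rightarrow> hv list lc" where
  "L_words Q = map (\<lambda>(c,n). (c, map L n)) Q"

lemma L_words_Nil [simp]: "L_words [] = []"
  by (simp add: L_words_def)

lemma L_words_Cons [simp]: "L_words ((c,n)#Q) = (c, map L n) # L_words Q"
  by (simp add: L_words_def)

lemma L_words_append [simp]: "L_words (P @ Q) = L_words P @ L_words Q"
  by (simp add: L_words_def)

lemma L_words_lc_scale [simp]: "L_words (lc_scale c Q) = lc_scale c (L_words Q)"
  by (induction Q) auto

lemma L_words_lc_ext: "L_words (lc_ext G ps) = lc_ext (\<lambda>n. L_words (G n)) ps"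
  by (induction ps) auto

lemma lc_cons_L_words: "lc_cons y (L_words Q) = map (\<lambda>(c,n). (c, y # map L n)) Q"
  by (induction Q) auto

lemma coeff_L_words: "coeff (L_words Q) v = (if set v \<subseteq> range L then coeff Q (map (inv L) v) else 0)"
proof (induction Q)
  case (Cons p Q)
  have "inj L" by (simp add: inj_def)
  then have "(map L n = v) = (set v \<subseteq> range L \<and> n = map (inv L) v)" for n
    by (auto intro!: map_idI simp: f_inv_into_f subset_iff)
  then show ?case using Cons by (cases p) auto
qed simp

lemma coeff_L_words_cong: "(\<And>r. coeff P r = coeff Q r) \<Longrightarrow> coeff (L_words P) v = coeff (L_words Q) v"
  by (simp add: coeff_L_words)

lemma Wker_induct_lc [consumes 1, case_names rel ind zero add scale]:
  assumes "f \<in> Wker \<phi>"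
    and "\<And>a x y b. P (rel_lc a x y b)"
    and "\<And>p a. p \<in> p_basis \<Longrightarrow> P [(1, a @ [p]), (- \<phi> p, a)]"
    and "P []"
    and "\<And>ts us. P ts \<Longrightarrow> P us \<Longrightarrow> P (ts @ us)"
    and "\<And>c ts. P ts \<Longrightarrow> P (lc_scale c ts)"
  shows "\<exists>ts. f = coeff ts \<and> P ts"
  using assms(1)
proof (induction rule: Wker.induct)
  case (rel a x y b)
  then show ?case using assms(2) by (auto simp: relv_eq_coeff)
next
  case (ind p a)
  have "(\<lambda>v. mono (a @ [p]) v - \<phi> p * mono a v) = coeff [(1, a @ [p]), (- \<phi> p, a)]"
    by (auto simp: mono_def fun_eq_iff)
  then show ?case using assms(3)[OF ind] by auto
next
  case zero
  then show ?case using assms(4) by (intro exI[of _ "[]"]) (simp add: fun_eq_iff)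
next
  case (add f g)
  then obtain ts us where "f = coeff ts" "P ts" "g = coeff us" "P us" by blast
  then show ?case using assms(5) by (intro exI[of _ "ts @ us"]) (simp add: fun_eq_iff)
next
  case (smult f c)
  then obtain ts where "f = coeff ts" "P ts" by blast
  then show ?case using assms(6) by (intro exI[of _ "lc_scale c ts"]) (simp add: fun_eq_iff)
qed

lemma Wker_lmul: "f \<in> Wker \<phi> \<Longrightarrow> lmul x f \<in> Wker \<phi>"
proof (induction rule: Wker.induct)
  case (rel a y z b)
  then show ?case
    using Wker.rel[of "x#a" y z b] by (simp add: relv_eq_coeff lmul_coeff lc_cons_rel_lc)
next
  case (ind p a)
  have "lmul x (\<lambda>v. mono (a @ [p]) v - \<phi> p * mono a v) = (\<lambda>v. mono ((x#a) @ [p]) v - \<phi> p * mono (x#a) v)"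
    by (auto simp: lmul_def mono_def fun_eq_iff split: list.split)
  then show ?case using Wker.ind[OF ind] by metis
next
  case zero
  have "lmul x (\<lambda>v. 0) = (\<lambda>v. 0)" by (auto simp: lmul_def fun_eq_iff split: list.split)
  then show ?case using Wker.zero by metis
next
  case (add f g)
  have "lmul x (\<lambda>v. f v + g v) = (\<lambda>v. lmul x f v + lmul x g v)"
    by (auto simp: lmul_def fun_eq_iff split: list.split)
  then show ?case using Wker.add[OF add.IH] by metis
next
  case (smult f c)
  have "lmul x (\<lambda>v. c * f v) = (\<lambda>v. c * lmul x f v)"
    by (auto simp: lmul_def fun_eq_iff split: list.split)
  then show ?case using Wker.smult[OF smult.IH] by metis
qed

context W_model
begin

definition act_word :: "hv list \<Rightarrow> int list lc \<Rightarrow> int list lc" where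
  "act_word w ps = foldr act_lc w ps"

text \<open>\<open>nf ts\<close> are the coordinates, in the PBW basis, of the image of \<open>ts\<close> in \<open>W(\<phi>)\<close>.\<close>
definition nf_word :: "hv list \<Rightarrow> int list lc" where
  "nf_word w = act_word w [(1,[])]"

definition nf :: "hv list lc \<Rightarrow> int list lc" where
  "nf ts = lc_ext nf_word ts"

lemma act_word_Nil [simp]: "act_word [] ps = ps"
  by (simp add: act_word_def)

lemma act_word_Cons [simp]: "act_word (x#w) ps = act_lc x (act_word w ps)"
  by (simp add: act_word_def)

lemma act_word_append: "act_word (a @ b) ps = act_word a (act_word b ps)"
  by (simp add: act_word_def)

lemma act_word_Nil2 [simp]: "act_word w [] = []"
  by (induction w) auto

lemma act_word_append2 [simp]: "act_word w (ps @ qs) = act_word w ps @ act_word w qs"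
  by (induction w) auto

lemma act_word_lc_scale [simp]: "act_word w (lc_scale c ps) = lc_scale c (act_word w ps)"
  by (induction w) auto

lemma coeff_act_word_cong: "(\<And>n. coeff ps n = coeff qs n) \<Longrightarrow> coeff (act_word w ps) r = coeff (act_word w qs) r"
proof (induction w arbitrary: r)
  case (Cons x w)
  then show ?case by simp (rule coeff_act_lc_cong, blast)
qed simp

lemma nf_word_Nil [simp]: "nf_word [] = [(1,[])]"
  by (simp add: nf_word_def)

lemma nf_word_Cons [simp]: "nf_word (x#w) = act_lc x (nf_word w)"
  by (simp add: nf_word_def)

lemma nf_word_append: "nf_word (a @ w) = act_word a (nf_word w)"
  by (simp add: nf_word_def act_word_append)

lemma nf_word_sorted: "lc_all sorted (nf_word w)"
  by (induction w) (auto intro: act_lc_sorted)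

lemma nf_Nil [simp]: "nf [] = []"
  by (simp add: nf_def)

lemma nf_Cons [simp]: "nf ((c,w)#ts) = lc_scale c (nf_word w) @ nf ts"
  by (simp add: nf_def)

lemma nf_append [simp]: "nf (ts @ us) = nf ts @ nf us"
  by (simp add: nf_def)

lemma nf_lc_scale [simp]: "nf (lc_scale c ts) = lc_scale c (nf ts)"
  by (simp add: nf_def)

lemma nf_lc_cons: "nf (lc_cons x ts) = act_lc x (nf ts)"
  by (induction ts) auto

lemma coeff_nf_cong: "(\<And>v. coeff ts v = coeff us v) \<Longrightarrow> coeff (nf ts) r = coeff (nf us) r"
  unfolding nf_def by (rule coeff_lc_ext_cong)

lemma nf_sorted: "lc_all sorted (nf ts)"
  unfolding nf_def by (rule lc_all_lc_ext) (rule nf_word_sorted)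

lemma coeff_nf_rel_lc: "coeff (nf (rel_lc a x y b)) r = 0"
proof -
  let ?P = "nf_word b"
  have "nf (lc_infix a ts b) = act_word a (lc_ext (\<lambda>z. act_lc z ?P) ts)" for ts
    by (induction ts) (auto simp: lc_infix_def nf_word_append)
  then have "coeff (nf (rel_lc a x y b)) r = coeff (act_word a (act_lc x (act_lc y ?P)
      @ lc_scale (-1) (act_lc y (act_lc x ?P)) @ lc_scale (-1) (lc_ext (\<lambda>z. act_lc z ?P) (bracket x y)))) r"
    by (simp add: rel_lc_def nf_word_append)
  also have "\<dots> = coeff (act_word a []) r"
    by (rule coeff_act_word_cong) (simp add: act_lc_commutator[OF nf_word_sorted, of x y])
  finally show ?thesis by simp
qed

lemma act_p_basis_Nil: "p \<in> p_basis \<Longrightarrow> act p [] = [(\<phi> p, [])]"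
  by (auto simp: p_basis_def)

lemma nf_word_snoc_p_basis:
  assumes "p \<in> p_basis"
  shows "nf_word (a @ [p]) = lc_scale (\<phi> p) (nf_word a)"
proof -
  have "nf_word (a @ [p]) = act_word a (lc_scale (\<phi> p) [(1,[])])"
    using assms by (simp add: nf_word_append act_lc_Cons act_p_basis_Nil)
  also have "\<dots> = lc_scale (\<phi> p) (nf_word a)"
    by (simp only: act_word_lc_scale nf_word_def)
  finally show ?thesis .
qed

lemma Wker_obtain_nf_0:
  assumes "f \<in> Wker \<phi>"
  obtains ts where "f = coeff ts" "\<And>r. coeff (nf ts) r = 0"
proof -
  have "\<exists>ts. f = coeff ts \<and> (\<forall>r. coeff (nf ts) r = 0)"
    by (rule Wker_induct_lc[OF assms]) (simp_all add: coeff_nf_rel_lc nf_word_snoc_p_basis)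
  then show thesis using that by blast
qed

lemma coeff_nf_eq_0_if_Wker:
  assumes "coeff ts \<in> Wker \<phi>"
  shows "coeff (nf ts) r = 0"
proof -
  obtain us where "coeff ts = coeff us" "\<And>r. coeff (nf us) r = 0"
    using Wker_obtain_nf_0[OF assms] by blast
  then show ?thesis using coeff_nf_cong[of ts us r] by simp
qed

end
context W_model
begin

definition W_equiv :: "hv list lc \<Rightarrow> hv list lc \<Rightarrow> bool" where
  "W_equiv ts us \<longleftrightarrow> (\<lambda>v. coeff ts v - coeff us v) \<in> Wker \<phi>"

lemma W_equiv_iff: "W_equiv ts us \<longleftrightarrow> coeff (ts @ lc_scale (-1) us) \<in> Wker \<phi>"
proof -
  have "coeff (ts @ lc_scale (-1) us) = (\<lambda>v. coeff ts v - coeff us v)" by auto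
  then show ?thesis by (simp add: W_equiv_def)
qed

lemma W_equiv_refl: "W_equiv ts ts"
  unfolding W_equiv_def using Wker.zero by simp

lemma W_equiv_cong:
  "W_equiv ts us \<Longrightarrow> (\<And>v. coeff ts v = coeff ts' v) \<Longrightarrow> (\<And>v. coeff us v = coeff us' v) \<Longrightarrow> W_equiv ts' us'"
  unfolding W_equiv_def by simp

lemma W_equiv_trans: "W_equiv ts us \<Longrightarrow> W_equiv us ws \<Longrightarrow> W_equiv ts ws"
  unfolding W_equiv_def using Wker.add by fastforce

lemma W_equiv_append: "W_equiv t1 u1 \<Longrightarrow> W_equiv t2 u2 \<Longrightarrow> W_equiv (t1 @ t2) (u1 @ u2)"
  unfolding W_equiv_def using Wker.add by (fastforce simp: algebra_simps)

lemma W_equiv_lc_scale: "W_equiv ts us \<Longrightarrow> W_equiv (lc_scale c ts) (lc_scale c us)"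
  unfolding W_equiv_def using Wker.smult by (fastforce simp: algebra_simps)

lemma W_equiv_lc_cons:
  assumes "W_equiv ts us"
  shows "W_equiv (lc_cons x ts) (lc_cons x us)"
proof -
  have "coeff (lc_cons x (ts @ lc_scale (-1) us)) \<in> Wker \<phi>"
    using Wker_lmul[OF assms[unfolded W_equiv_iff], of x] by (simp only: lmul_coeff)
  then show ?thesis by (simp add: W_equiv_iff)
qed

lemma W_equiv_lc_ext:
  "(\<And>c n. (c,n) \<in> set ps \<Longrightarrow> W_equiv [(1, F n)] (G n)) \<Longrightarrow>
    W_equiv (map (\<lambda>(c,n). (c, F n)) ps) (lc_ext G ps)"
proof (induction ps)
  case (Cons p ps)
  obtain c n where p: "p = (c,n)" by force
  have "W_equiv (lc_scale c [(1, F n)] @ map (\<lambda>(c,n). (c, F n)) ps) (lc_scale c (G n) @ lc_ext G ps)"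
    using Cons p by (intro W_equiv_append W_equiv_lc_scale) auto
  then show ?case by (rule W_equiv_cong) (simp_all add: p)
qed (simp add: W_equiv_refl)

lemma W_equiv_act_Cons:
  assumes IH: "\<And>n x. length n \<le> length m \<Longrightarrow> sorted n \<Longrightarrow> W_equiv [(1, x # map L n)] (L_words (act x n))"
    and sorted: "sorted (j#m)" and x: "\<not> (\<exists>i. x = L i \<and> i \<le> j)"
  shows "W_equiv [(1, x # L j # map L m)] (L_words (act x (j#m)))"
proof -
  have m: "sorted m" "\<forall>e\<in>set m. j \<le> e" using sorted by auto
  let ?ml = "map L m"
  have "coeff ([(1, x # L j # ?ml)] @ lc_scale (-1) ([(1, L j # x # ?ml)] @ lc_infix [] (bracket x (L j)) ?ml))
      = coeff (rel_lc [] x (L j) ?ml)"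
    by (simp add: rel_lc_def fun_eq_iff)
  then have swap: "W_equiv [(1, x # L j # ?ml)] ([(1, L j # x # ?ml)] @ lc_infix [] (bracket x (L j)) ?ml)"
    using Wker.rel[of "[]" x "L j" ?ml \<phi>] by (simp add: W_equiv_iff relv_eq_coeff)
  have commuted: "W_equiv [(1, L j # x # ?ml)] (lc_cons (L j) (L_words (act x m)))"
    using W_equiv_lc_cons[OF IH[OF order_refl m(1)], of "L j"] by simp
  have normalised: "W_equiv (lc_cons (L j) (L_words (act x m))) (L_words (act_lc (L j) (act x m)))"
  proof -
    have "W_equiv (map (\<lambda>(c,n). (c, L j # map L n)) (act x m)) (lc_ext (\<lambda>n. L_words (act (L j) n)) (act x m))"
    proof (rule W_equiv_lc_ext)
      fix c n assume cn: "(c,n) \<in> set (act x m)"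
      have "sorted n" using act_sorted[OF m(1)] cn by (rule lc_all_mem)
      have "(\<forall>e\<in>set n. j \<le> e) \<or> length n \<le> length m"
        using act_keys_above_or_shorter[OF sorted x] cn by (rule lc_all_mem)
      then show "W_equiv [(1, L j # map L n)] (L_words (act (L j) n))"
        using IH \<open>sorted n\<close> by (auto simp: act_L_lowest W_equiv_refl)
    qed
    then show ?thesis
      by (simp add: lc_cons_L_words act_lc_def L_words_lc_ext)
  qed
  have bracket: "W_equiv (lc_infix [] (bracket x (L j)) ?ml) (L_words (act_bracket x (L j) m))"
    unfolding lc_infix_def act_bracket_def L_words_lc_ext
    by (rule W_equiv_lc_ext) (simp add: IH[OF order_refl m(1)])
  from W_equiv_trans[OF swap W_equiv_append[OF W_equiv_trans[OF commuted normalised] bracket]]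
  have "W_equiv [(1, x # L j # ?ml)] (L_words (act_lc (L j) (act x m) @ act_bracket x (L j) m))"
    by (simp only: L_words_append)
  then show ?thesis
    by (rule W_equiv_cong) (rule refl, rule coeff_L_words_cong, simp add: act_Cons_lowest[OF m])
qed

lemma W_equiv_act: "sorted n \<Longrightarrow> W_equiv [(1, x # map L n)] (L_words (act x n))"
proof (induction "length n" arbitrary: n x rule: less_induct)
  case less
  show ?case
  proof (cases n)
    case Nil
    show ?thesis
    proof (cases "x \<in> range L")
      case False
      then have "x \<in> p_basis" by (cases x) (auto simp: p_basis_def)
      moreover have "coeff ([(1, [x])] @ lc_scale (-1) [(\<phi> x, [])]) = (\<lambda>v. mono ([] @ [x]) v - \<phi> x * mono [] v)"
        by (auto simp: mono_def fun_eq_iff)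
      ultimately show ?thesis
        using Wker.ind[of x "[]" \<phi>] False Nil by (simp add: W_equiv_iff act_non_L_Nil)
    qed (auto simp: Nil W_equiv_refl)
  next
    case (Cons j m)
    show ?thesis
    proof (cases "\<exists>i. x = L i \<and> i \<le> j")
      case True
      then show ?thesis by (auto simp: Cons act_L_Cons W_equiv_refl)
    next
      case False
      have "W_equiv [(1, x # map L n')] (L_words (act x n'))" if "length n' \<le> length m" "sorted n'" for n' x
        using less that Cons by simp
      then show ?thesis
        using W_equiv_act_Cons[OF _ _ False] less.prems Cons by simp
    qed
  qed
qed

lemma W_equiv_nf: "W_equiv ts (L_words (nf ts))"
proof -
  have "W_equiv [(1,w)] (L_words (nf_word w))" for w
  proof (induction w)
    case (Cons x w)
    have "W_equiv (lc_cons x (L_words (nf_word w))) (L_words (act_lc x (nf_word w)))"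
      unfolding act_lc_def L_words_lc_ext
      using W_equiv_lc_ext[of "nf_word w" "\<lambda>n. x # map L n" "\<lambda>n. L_words (act x n)"]
        W_equiv_act lc_all_mem[OF nf_word_sorted]
      by (simp add: lc_cons_L_words)
    then show ?case
      using W_equiv_lc_cons[OF Cons.IH, of x] by (auto intro: W_equiv_trans)
  qed (simp add: W_equiv_refl)
  then have "W_equiv (map (\<lambda>(c,w). (c, w)) ts) (lc_ext (\<lambda>w. L_words (nf_word w)) ts)"
    by (intro W_equiv_lc_ext)
  then show ?thesis
    by (simp add: nf_def L_words_lc_ext case_prod_beta)
qed

theorem coeff_in_Wker_iff: "coeff ts \<in> Wker \<phi> \<longleftrightarrow> (\<forall>r. coeff (nf ts) r = 0)"
proof
  assume "\<forall>r. coeff (nf ts) r = 0"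
  then have "W_equiv ts []"
    by (intro W_equiv_cong[OF W_equiv_nf[of ts]]) (simp_all add: coeff_L_words)
  then show "coeff ts \<in> Wker \<phi>" unfolding W_equiv_def by simp
qed (use coeff_nf_eq_0_if_Wker in blast)

end
section \<open>Irreducibility when \<open>|S\<^sup>\<phi>| \<ge> 2\<close>\<close>

lemma sorted_mset_inj: "sorted xs \<Longrightarrow> sorted ys \<Longrightarrow> mset xs = mset ys \<Longrightarrow> xs = ys"
  by (metis properties_for_sort sorted_sort_id)

lemma remove1_Cons_sorted:
  assumes "sorted (j#m)" "e \<in> set m"
  shows "remove1 e (j#m) = j # remove1 e m"
proof (cases "e = j")
  case True
  show ?thesis
  proof (cases m)
    case (Cons a m')
    then have "a = j" using assms True by (auto intro: antisym)
    then show ?thesis using Cons True by simp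
  qed (use assms in simp)
qed simp

text \<open>Match an extreme point of \<open>S\<close> with the opposite extreme point of \<open>E\<close>.\<close>
lemma exists_shift_meeting_once:
  fixes S E :: "int set"
  assumes "finite S" "2 \<le> card S" "finite E" "E \<noteq> {}"
  shows "\<exists>e n0. e \<in> E \<and> n0 \<noteq> 0 \<and> n0 + e \<in> S \<and> (\<forall>v\<in>E. n0 + v \<in> S \<longrightarrow> v = e)"
proof -
  have "\<not> card S \<le> Suc 0" using assms(2) by simp
  then obtain a b where ab: "a \<in> S" "b \<in> S" "a \<noteq> b"
    using card_le_Suc0_iff_eq[OF assms(1)] by blast
  have S_bounds: "Min S \<in> S" "Max S \<in> S" "\<And>t. t \<in> S \<Longrightarrow> Min S \<le> t \<and> t \<le> Max S"
    using assms(1) ab(1) by (auto intro: Min_in Max_in)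
  have "Min S < Max S"
    using S_bounds(3)[OF ab(1)] S_bounds(3)[OF ab(2)] ab(3) by linarith
  have E_bounds: "Min E \<in> E" "Max E \<in> E" "\<And>v. v \<in> E \<Longrightarrow> Min E \<le> v \<and> v \<le> Max E"
    using assms(3,4) by auto
  show ?thesis
  proof (cases "Min S = Max E")
    case False
    show ?thesis
    proof (intro exI conjI ballI impI)
      show "Max E \<in> E" "Min S - Max E \<noteq> 0" "Min S - Max E + Max E \<in> S"
        using False E_bounds S_bounds by simp_all
      fix v assume "v \<in> E" "Min S - Max E + v \<in> S"
      then show "v = Max E" using S_bounds(3) E_bounds(3) by fastforce
    qed
  next
    case True
    show ?thesis
    proof (intro exI conjI ballI impI)
      show "Min E \<in> E" "Max S - Min E \<noteq> 0" "Max S - Min E + Min E \<in> S"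
        using True \<open>Min S < Max S\<close> E_bounds S_bounds by fastforce+
      fix v assume "v \<in> E" "Max S - Min E + v \<in> S"
      then show "v = Min E" using S_bounds(3) E_bounds(3) by fastforce
    qed
  qed
qed

context W_model
begin

text \<open>The part of \<open>(I\<^sub>n\<^sub>0 - \<phi>(I\<^sub>n\<^sub>0)) \<cdot> m\<close> of length \<open>length m - 1\<close>: each factor \<open>L\<^sub>e\<close> of \<open>m\<close>
  is contracted via \<open>[I\<^sub>n\<^sub>0, L\<^sub>e] = -n\<^sub>0 I\<^sub>n\<^sub>0\<^sub>+\<^sub>e + \<dots>\<close>, and \<open>I\<^sub>n\<^sub>0\<^sub>+\<^sub>e\<close> then acts by its eigenvalue.\<close>
definition I_contraction :: "int \<Rightarrow> int list \<Rightarrow> int list lc" where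
  "I_contraction n0 m = map (\<lambda>e. (- of_int n0 * \<phi> (I (n0 + e)), remove1 e m)) m"

lemma I_contraction_Nil [simp]: "I_contraction n0 [] = []"
  by (simp add: I_contraction_def)

lemma I_contraction_Cons:
  assumes "sorted (j#m)"
  shows "I_contraction n0 (j#m)
     = (- of_int n0 * \<phi> (I (n0 + j)), m) # map (\<lambda>e. (- of_int n0 * \<phi> (I (n0 + e)), j # remove1 e m)) m"
proof -
  have "map (\<lambda>e. (- of_int n0 * \<phi> (I (n0 + e)), remove1 e (j#m))) m
      = map (\<lambda>e. (- of_int n0 * \<phi> (I (n0 + e)), j # remove1 e m)) m"
    by (rule map_cong) (simp_all add: remove1_Cons_sorted[OF assms] del: remove1.simps)
  then show ?thesis by (simp add: I_contraction_def)
qed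

lemma I_contraction_length: "lc_all (\<lambda>r. Suc (length r) = length m) (I_contraction n0 m)"
proof -
  have "Suc (length (remove1 e m)) = length m" if "e \<in> set m" for e
  proof -
    have "0 < length m" using that by (auto simp: length_pos_if_in_set)
    then show ?thesis using that by (simp add: length_remove1)
  qed
  then show ?thesis by (auto simp: I_contraction_def lc_all_def lc_keys_def)
qed

lemma act_lc_L_lowest_map:
  "(\<And>i. i \<in> set is \<Longrightarrow> \<forall>e\<in>set (g i). j \<le> e) \<Longrightarrow>
    act_lc (L j) (map (\<lambda>i. (c i, g i)) is) = map (\<lambda>i. (c i, j # g i)) is"
proof (induction "is")
  case (Cons a "is")
  have "act (L j) (g a) = [(1, j # g a)]" using Cons.prems[of a] by (simp add: act_L_lowest)
  moreover have "act_lc (L j) (map (\<lambda>i. (c i, g i)) is) = map (\<lambda>i. (c i, j # g i)) is"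
    using Cons.prems by (intro Cons.IH) auto
  ultimately show ?case by (simp add: act_lc_Cons)
qed simp

lemma act_I_expansion:
  "sorted m \<Longrightarrow> \<exists>E. lc_all (\<lambda>r. length r + 2 \<le> length m) E \<and>
    (\<forall>r. coeff (act (I n0) m) r = coeff ((\<phi> (I n0), m) # I_contraction n0 m @ E) r)"
proof (induction m arbitrary: n0)
  case (Cons j m)
  have m: "sorted m" "\<forall>e\<in>set m. j \<le> e" using Cons.prems by auto
  obtain E1 where E1: "lc_all (\<lambda>r. length r + 2 \<le> length m) E1"
    "\<And>r. coeff (act (I n0) m) r = coeff ((\<phi> (I n0), m) # I_contraction n0 m @ E1) r"
    using Cons.IH[OF m(1)] by blast
  obtain E2 where E2: "lc_all (\<lambda>r. length r + 2 \<le> length m) E2"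
    "\<And>r. coeff (act (I (j+n0)) m) r = coeff ((\<phi> (I (j+n0)), m) # I_contraction (j+n0) m @ E2) r"
    using Cons.IH[OF m(1)] by blast
  let ?E = "act_lc (L j) E1 @ lc_scale (- of_int n0) (I_contraction (j+n0) m @ E2)"
  have "lc_all (\<lambda>r. length r + 2 \<le> Suc (length m)) (act_lc (L j) E1)"
    unfolding act_lc_def
  proof (rule lc_all_lc_ext)
    fix c n assume "(c,n) \<in> set E1"
    then have "length n + 2 \<le> length m" using E1(1) by (rule lc_all_mem[rotated])
    then show "lc_all (\<lambda>r. length r + 2 \<le> Suc (length m)) (act (L j) n)"
      by (intro lc_all_mono[OF act_L_length]) simp
  qed
  moreover have "lc_all (\<lambda>r. length r + 2 \<le> Suc (length m)) (I_contraction (j+n0) m @ E2)"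
    using lc_all_mono[OF I_contraction_length] lc_all_mono[OF E2(1)] by simp
  ultimately have "lc_all (\<lambda>r. length r + 2 \<le> length (j#m)) ?E" by simp
  moreover have "coeff (act (I n0) (j#m)) r = coeff ((\<phi> (I n0), j#m) # I_contraction n0 (j#m) @ ?E) r" for r
  proof -
    have "act_lc (L j) (I_contraction n0 m) = map (\<lambda>e. (- of_int n0 * \<phi> (I (n0 + e)), j # remove1 e m)) m"
      unfolding I_contraction_def by (rule act_lc_L_lowest_map) (use m(2) in \<open>auto dest: notin_set_remove1\<close>)
    moreover have "coeff (act_lc (L j) (act (I n0) m)) r
        = coeff (act_lc (L j) ((\<phi> (I n0), m) # I_contraction n0 m @ E1)) r"
      by (rule coeff_act_lc_cong) (rule E1(2))
    ultimately show ?thesis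
      using E2(2)[of r] Cons.prems
      by (simp add: act_I_Cons \<phi>_Z2 act_lc_Cons act_L_lowest[OF m(2)] I_contraction_Cons algebra_simps)
  qed
  ultimately show ?case by blast
qed (intro exI[of _ "[]"], simp)

lemma coeff_act_I_top:
  assumes "sorted m" "length m \<le> Suc (length r)"
  shows "coeff (act (I n0) m) r = (if m = r then \<phi> (I n0) else 0) + coeff (I_contraction n0 m) r"
proof -
  obtain E where E: "lc_all (\<lambda>r. length r + 2 \<le> length m) E"
    "coeff (act (I n0) m) r = coeff ((\<phi> (I n0), m) # I_contraction n0 m @ E) r"
    using act_I_expansion[OF assms(1), of n0] by blast
  have "coeff E r = 0"
    using E(1) assms(2) by (intro coeff_eq_0I) (auto dest: lc_all_mem)
  then show ?thesis using E(2) by simp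
qed

end
context W_model
begin

lemma coeff_I_contraction:
  "coeff (I_contraction n0 m) r = (\<Sum>e\<leftarrow>m. if remove1 e m = r then - (of_int n0 * \<phi> (I (n0 + e))) else 0)"
  by (simp add: I_contraction_def coeff_def comp_def)

definition I_shift :: "int \<Rightarrow> int list lc \<Rightarrow> int list lc" where
  "I_shift n0 P = act_lc (I n0) P @ lc_scale (- \<phi> (I n0)) P"

lemma coeff_I_shift:
  assumes sorted: "lc_all sorted P" and short: "\<forall>n. coeff P n \<noteq> 0 \<longrightarrow> length n \<le> Suc (length r)"
  shows "coeff (I_shift n0 P) r = (\<Sum>n\<in>lc_keys P. coeff P n * coeff (I_contraction n0 n) r)"
proof -
  let ?K = "lc_keys P"
  have "coeff (lc_ext (\<lambda>n. [(1,n)]) P) r = coeff P r" by (induction P) auto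
  then have P: "coeff P r = (\<Sum>n\<in>?K. coeff P n * coeff [(1,n)] r)"
    using coeff_lc_ext_sum[of ?K P "\<lambda>n. [(1,n)]" r] by simp
  have IP: "coeff (act_lc (I n0) P) r = (\<Sum>n\<in>?K. coeff P n * coeff (act (I n0) n) r)"
    unfolding act_lc_def by (rule coeff_lc_ext_sum) auto
  have "coeff (I_shift n0 P) r = coeff (act_lc (I n0) P) r - \<phi> (I n0) * coeff P r"
    by (simp add: I_shift_def)
  also have "\<dots> = (\<Sum>n\<in>?K. coeff P n * coeff (act (I n0) n) r - \<phi> (I n0) * (coeff P n * coeff [(1,n)] r))"
    by (simp only: IP P sum_subtractf sum_distrib_left)
  also have "\<dots> = (\<Sum>n\<in>?K. coeff P n * coeff (I_contraction n0 n) r)"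
  proof (rule sum.cong)
    fix n assume "n \<in> ?K"
    show "coeff P n * coeff (act (I n0) n) r - \<phi> (I n0) * (coeff P n * coeff [(1,n)] r)
      = coeff P n * coeff (I_contraction n0 n) r"
    proof (cases "coeff P n = 0")
      case False
      then show ?thesis
        using coeff_act_I_top[OF lc_all_keys[OF sorted \<open>n \<in> ?K\<close>]] short by (auto simp: algebra_simps)
    qed simp
  qed simp
  finally show ?thesis .
qed

lemma coeff_I_contraction_separated:
  assumes "e \<in> set n" "n0 \<noteq> 0" "\<phi> (I (n0 + e)) \<noteq> 0"
    and sep: "\<forall>v\<in>set n. \<phi> (I (n0 + v)) \<noteq> 0 \<longrightarrow> v = e"
  shows "coeff (I_contraction n0 n) (remove1 e n) \<noteq> 0"
proof -
  let ?c = "- (of_int n0 * \<phi> (I (n0 + e)))"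
  have "(if remove1 v n = remove1 e n then - (of_int n0 * \<phi> (I (n0 + v))) else 0) = (if v = e then ?c else 0)"
    if "v \<in> set n" for v
    using sep that by auto
  then have "coeff (I_contraction n0 n) (remove1 e n) = (\<Sum>v\<leftarrow>n. if v = e then ?c else 0)"
    unfolding coeff_I_contraction by (intro arg_cong[where f = sum_list] map_cong) simp_all
  also have "\<dots> = of_nat (count_list n e) * ?c"
    by (induction n) (simp_all add: distrib_right)
  finally show ?thesis
    using assms(1-3) by (simp add: count_list_0_iff)
qed

lemma I_contraction_determines_monomial:
  assumes "sorted n" "sorted n'" "e \<in> set n'"
    and sep: "\<forall>v\<in>set n. \<phi> (I (n0 + v)) \<noteq> 0 \<longrightarrow> v = e"
    and nonzero: "coeff (I_contraction n0 n) (remove1 e n') \<noteq> 0"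
  shows "n = n'"
proof -
  have "\<exists>c. (c, remove1 e n') \<in> set (I_contraction n0 n) \<and> c \<noteq> 0"
  proof (rule ccontr)
    assume "\<not> ?thesis"
    then have "coeff (I_contraction n0 n) (remove1 e n') = 0" by (intro coeff_eq_0I) blast
    then show False using nonzero by simp
  qed
  then obtain v where v: "v \<in> set n" "\<phi> (I (n0 + v)) \<noteq> 0" "remove1 v n = remove1 e n'"
    by (auto simp: I_contraction_def)
  then have "v = e" using sep by blast
  have "mset n = add_mset e (mset (remove1 e n))"
    using v(1) \<open>v = e\<close> by simp
  also have "\<dots> = mset n'"
    using v(3) \<open>v = e\<close> \<open>e \<in> set n'\<close> by simp
  finally show ?thesis by (rule sorted_mset_inj[OF assms(1,2)])
qed

lemma coeff_I_shift_above:
  assumes "lc_all sorted P" and short: "\<forall>n. coeff P n \<noteq> 0 \<longrightarrow> length n \<le> Suc d" and "d < length r"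
  shows "coeff (I_shift n0 P) r = 0"
proof -
  have "coeff P n * coeff (I_contraction n0 n) r = 0" for n
  proof (rule ccontr)
    assume "coeff P n * coeff (I_contraction n0 n) r \<noteq> 0"
    then have "length n \<le> Suc d" "Suc (length r) = length n"
      using short lc_all_keys[OF I_contraction_length coeff_nonzero_in_keys] by auto
    then show False using \<open>d < length r\<close> by simp
  qed
  moreover have "\<forall>n. coeff P n \<noteq> 0 \<longrightarrow> length n \<le> Suc (length r)"
    using short \<open>d < length r\<close> by fastforce
  ultimately show ?thesis
    using coeff_I_shift[OF assms(1)] by (simp add: sum.neutral)
qed

lemma coeff_I_shift_separated:
  assumes "lc_all sorted P" and short: "\<forall>n. coeff P n \<noteq> 0 \<longrightarrow> length n \<le> Suc d"
    and top: "coeff P n1 \<noteq> 0" "length n1 = Suc d" "e \<in> set n1"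
    and shift: "n0 \<noteq> 0" "\<phi> (I (n0 + e)) \<noteq> 0"
    and sep: "\<And>n. coeff P n \<noteq> 0 \<Longrightarrow> length n = Suc d \<Longrightarrow> \<forall>v\<in>set n. \<phi> (I (n0 + v)) \<noteq> 0 \<longrightarrow> v = e"
  shows "coeff (I_shift n0 P) (remove1 e n1) \<noteq> 0"
proof -
  let ?r = "remove1 e n1"
  let ?g = "\<lambda>n. coeff P n * coeff (I_contraction n0 n) ?r"
  have len_r: "length ?r = d" using top by (simp add: length_remove1)
  have n1: "n1 \<in> lc_keys P" using top(1) by (rule coeff_nonzero_in_keys)
  have "?g n = 0" if "n \<in> lc_keys P" "n \<noteq> n1" for n
  proof (rule ccontr)
    assume "?g n \<noteq> 0"
    then have "length n = Suc d"
      using short lc_all_keys[OF I_contraction_length coeff_nonzero_in_keys] len_r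
      by (metis le_antisym mult_eq_0_iff order_refl)
    then have "n = n1"
      using \<open>?g n \<noteq> 0\<close> sep I_contraction_determines_monomial lc_all_keys[OF assms(1)] that(1) n1 top(3)
      by (metis mult_eq_0_iff)
    then show False using that(2) by simp
  qed
  then have "(\<Sum>n\<in>lc_keys P. ?g n) = ?g n1"
    using n1 by (intro sum.mono_neutral_left[of _ "{n1}", simplified, symmetric]) auto
  moreover have "?g n1 \<noteq> 0"
    using coeff_I_contraction_separated[OF top(3) shift sep[OF top(1,2)]] top(1) by simp
  moreover have "\<forall>n. coeff P n \<noteq> 0 \<longrightarrow> length n \<le> Suc (length ?r)"
    using short len_r by simp
  ultimately show ?thesis
    using coeff_I_shift[OF assms(1)] by simp
qed

end
context W_model
begin

lemma exists_I_shift_lowering_degree: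
  assumes fin: "finite (S_phi \<phi>)" and two: "2 \<le> card (S_phi \<phi>)" and sorted: "lc_all sorted P"
    and short: "\<forall>n. coeff P n \<noteq> 0 \<longrightarrow> length n \<le> Suc d"
    and top: "coeff P n1 \<noteq> 0" "length n1 = Suc d"
  obtains n0 r where "\<forall>r. coeff (I_shift n0 P) r \<noteq> 0 \<longrightarrow> length r \<le> d" "coeff (I_shift n0 P) r \<noteq> 0"
proof -
  let ?T = "{n \<in> lc_keys P. coeff P n \<noteq> 0 \<and> length n = Suc d}"
  let ?E = "\<Union>n\<in>?T. set n"
  have "n1 \<in> ?T" using top coeff_nonzero_in_keys[OF top(1)] by simp
  moreover have "hd n1 \<in> set n1" using top(2) by (intro hd_in_set) auto
  ultimately have "hd n1 \<in> ?E" by (rule UN_I)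
  then have E_ne: "?E \<noteq> {}" using ex_in_conv[of ?E] by blast
  have "finite ?T"
    by (rule finite_subset[OF _ finite_lc_keys[of P]]) blast
  then have E_fin: "finite ?E" by (rule finite_UN_I) simp
  obtain e n0 where e: "e \<in> ?E" "n0 \<noteq> 0" "n0 + e \<in> S_phi \<phi>"
      and sep: "\<forall>v\<in>?E. n0 + v \<in> S_phi \<phi> \<longrightarrow> v = e"
    using exists_shift_meeting_once[OF fin two E_fin E_ne] by blast
  from e(1) obtain n2 where n2: "coeff P n2 \<noteq> 0" "length n2 = Suc d" "e \<in> set n2" by blast
  have "coeff (I_shift n0 P) (remove1 e n2) \<noteq> 0"
  proof (rule coeff_I_shift_separated[OF sorted short n2 e(2)])
    show "\<phi> (I (n0 + e)) \<noteq> 0" using e(3) by (simp add: S_phi_def)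
    fix n assume "coeff P n \<noteq> 0" "length n = Suc d"
    then have "n \<in> ?T" using coeff_nonzero_in_keys by simp
    show "\<forall>v\<in>set n. \<phi> (I (n0 + v)) \<noteq> 0 \<longrightarrow> v = e"
    proof (intro ballI impI)
      fix v assume "v \<in> set n" "\<phi> (I (n0 + v)) \<noteq> 0"
      then have "v \<in> ?E" "n0 + v \<in> S_phi \<phi>"
        using UN_I[OF \<open>n \<in> ?T\<close>] by (simp_all add: S_phi_def)
      then show "v = e" using sep by blast
    qed
  qed
  moreover have "\<forall>r. coeff (I_shift n0 P) r \<noteq> 0 \<longrightarrow> length r \<le> d"
    using coeff_I_shift_above[OF sorted short] not_less by blast
  ultimately show thesis using that by blast
qed

lemma nf_I_shift: "nf (lc_cons (I n0) ts @ lc_scale (- \<phi> (I n0)) ts) = I_shift n0 (nf ts)"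
  by (simp add: I_shift_def nf_lc_cons)

lemma W_submodule_contains_vacuum_degree_0:
  assumes sub: "W_submodule \<phi> M" and "coeff ts \<in> M"
    and nonzero: "coeff (nf ts) [] \<noteq> 0" and only: "\<And>r. coeff (nf ts) r \<noteq> 0 \<Longrightarrow> r = []"
  shows "mono [] \<in> M"
proof -
  let ?c = "coeff (nf ts) []"
  have "coeff (L_words (nf ts)) v = coeff [(?c, [])] v" for v
    using only[of "map (inv L) v"] by (cases "v = []") (auto simp: coeff_L_words)
  then have "W_equiv ts [(?c, [])]"
    by (rule W_equiv_cong[OF W_equiv_nf, rotated]) simp
  then have "coeff (ts @ lc_scale (-1) [(?c, [])]) \<in> M"
    using sub by (auto simp: W_equiv_iff W_submodule_def)
  from W_submodule_append[OF sub W_submodule_lc_scale[OF sub this] \<open>coeff ts \<in> M\<close>]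
  have "coeff (lc_scale (-1) (ts @ lc_scale (-1) [(?c, [])]) @ ts) \<in> M" .
  then have "coeff (lc_scale (1 / ?c) (lc_scale (-1) (ts @ lc_scale (-1) [(?c, [])]) @ ts)) \<in> M"
    by (rule W_submodule_lc_scale[OF sub])
  moreover have "coeff (lc_scale (1 / ?c) (lc_scale (-1) (ts @ lc_scale (-1) [(?c, [])]) @ ts)) = mono []"
    using nonzero by (auto simp: mono_def fun_eq_iff)
  ultimately show ?thesis by simp
qed

lemma W_submodule_contains_vacuum:
  assumes fin: "finite (S_phi \<phi>)" and two: "2 \<le> card (S_phi \<phi>)" and sub: "W_submodule \<phi> M"
  shows "coeff ts \<in> M \<Longrightarrow> coeff (nf ts) r \<noteq> 0 \<Longrightarrow> \<forall>r. coeff (nf ts) r \<noteq> 0 \<longrightarrow> length r \<le> d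
    \<Longrightarrow> mono [] \<in> M"
proof (induction d arbitrary: ts r)
  case 0
  then have only: "\<And>r. coeff (nf ts) r \<noteq> 0 \<Longrightarrow> r = []" by simp
  have "coeff (nf ts) [] \<noteq> 0" using 0(2) only[OF 0(2)] by simp
  then show ?case by (rule W_submodule_contains_vacuum_degree_0[OF sub 0(1) _ only])
next
  case (Suc d)
  show ?case
  proof (cases "\<exists>n. coeff (nf ts) n \<noteq> 0 \<and> length n = Suc d")
    case True
    then obtain n1 where n1: "coeff (nf ts) n1 \<noteq> 0" "length n1 = Suc d" by blast
    obtain n0 r' where low: "\<forall>r. coeff (I_shift n0 (nf ts)) r \<noteq> 0 \<longrightarrow> length r \<le> d"
        "coeff (I_shift n0 (nf ts)) r' \<noteq> 0"
      by (rule exists_I_shift_lowering_degree[OF fin two nf_sorted Suc.prems(3) n1])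
    have "coeff (lc_cons (I n0) ts @ lc_scale (- \<phi> (I n0)) ts) \<in> M"
      by (rule W_submodule_append[OF sub W_submodule_lc_cons[OF sub Suc.prems(1)]
            W_submodule_lc_scale[OF sub Suc.prems(1)]])
    then show ?thesis
      by (rule Suc.IH[of _ r']) (use low in \<open>simp_all add: nf_I_shift del: nf_append\<close>)
  next
    case False
    have "\<forall>r. coeff (nf ts) r \<noteq> 0 \<longrightarrow> length r \<le> d"
    proof (intro allI impI)
      fix r assume "coeff (nf ts) r \<noteq> 0"
      then have "length r \<le> Suc d" "length r \<noteq> Suc d" using Suc.prems(3) False by auto
      then show "length r \<le> d" by simp
    qed
    then show ?thesis by (rule Suc.IH[OF Suc.prems(1,2)])
  qed
qed

lemma W_submodule_eq_Tfin_if_vacuum: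
  assumes sub: "W_submodule \<phi> M" and "mono [] \<in> M"
  shows "M = Tfin"
proof -
  have words: "coeff [(1,w)] \<in> M" for w
  proof (induction w)
    case Nil
    then show ?case using \<open>mono [] \<in> M\<close> by (simp only: mono_eq_coeff)
  next
    case (Cons x w)
    then show ?case using W_submodule_lc_cons[OF sub Cons.IH, of x] by (simp only: lc_cons_Cons lc_cons_Nil)
  qed
  have all: "coeff us \<in> M" for us
  proof (induction us)
    case Nil
    have "(\<lambda>v. 0) \<in> M" using sub Wker.zero unfolding W_submodule_def by blast
    then show ?case by (simp add: fun_eq_iff)
  next
    case (Cons p us)
    obtain c w where "p = (c,w)" by force
    then have "lc_scale c [(1,w)] @ us = p # us" by simp
    then show ?case
      using W_submodule_append[OF sub W_submodule_lc_scale[OF sub words] Cons.IH, of c w] by simp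
  qed
  show ?thesis
  proof
    show "M \<subseteq> Tfin" using sub by (simp add: W_submodule_def)
    show "Tfin \<subseteq> M"
    proof
      fix f assume "f \<in> Tfin"
      then obtain us where "f = coeff us" by (rule Tfin_obtain_lc)
      then show "f \<in> M" using all by simp
    qed
  qed
qed

lemma mono_Nil_notin_Wker: "mono [] \<notin> Wker \<phi>"
proof
  assume "mono [] \<in> Wker \<phi>"
  then have "coeff (nf [(1,[])]) [] = 0"
    by (intro coeff_nf_eq_0_if_Wker) (simp add: mono_eq_coeff)
  then show False by simp
qed

theorem W_irreducible_if_card_S_phi_ge_2:
  assumes fin: "finite (S_phi \<phi>)" and two: "2 \<le> card (S_phi \<phi>)"
  shows "W_irreducible \<phi>"
  unfolding W_irreducible_iff
proof (intro conjI allI impI)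
  show "Wker \<phi> \<noteq> Tfin" using mono_Nil_notin_Wker coeff_in_Tfin by (auto simp: mono_eq_coeff)
next
  fix M assume sub: "W_submodule \<phi> M"
  show "M = Wker \<phi> \<or> M = Tfin"
  proof (cases "M = Wker \<phi>")
    case False
    then obtain f where "f \<in> M" "f \<notin> Wker \<phi>"
      using sub unfolding W_submodule_def by blast
    moreover obtain ts where "f = coeff ts"
      using \<open>f \<in> M\<close> sub Tfin_obtain_lc unfolding W_submodule_def by blast
    ultimately have ts: "coeff ts \<in> M" "coeff ts \<notin> Wker \<phi>" by simp_all
    then obtain r where "coeff (nf ts) r \<noteq> 0" by (auto simp: coeff_in_Wker_iff)
    moreover have "\<forall>r. coeff (nf ts) r \<noteq> 0 \<longrightarrow> length r \<le> Max (length ` lc_keys (nf ts))"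
      by (auto intro: Max_ge dest: coeff_nonzero_in_keys)
    ultimately have "mono [] \<in> M" by (rule W_submodule_contains_vacuum[OF fin two sub ts(1)])
    then show ?thesis using W_submodule_eq_Tfin_if_vacuum[OF sub] by blast
  qed simp
qed

end
section \<open>Reducibility when \<open>S\<^sup>\<phi>\<close> is a singleton\<close>

context W_model
begin

text \<open>If \<open>S\<^sup>\<phi> = {k}\<close>, then \<open>L\<^sub>k w\<^sub>\<phi>\<close> is again an eigenvector of every basis element \<open>p\<close> of \<open>\<pp>\<close>, since
  \<open>[I\<^sub>n, L\<^sub>k] w\<^sub>\<phi> = -n \<phi>(I\<^sub>n\<^sub>+\<^sub>k) w\<^sub>\<phi>\<close> vanishes for \<open>n \<noteq> 0\<close>.\<close>
lemma act_p_basis_L_vacuum: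
  assumes S: "S_phi \<phi> = {k}" and p: "p \<in> p_basis"
  shows "coeff (act_lc p [(1,[k])]) r = \<phi> p * coeff [(1,[k])] r"
proof -
  consider n where "p = I n" | "p = Z1" | "p = Z2" | "p = Z3"
    using p by (auto simp: p_basis_def)
  then show ?thesis
  proof cases
    case (1 n)
    have "of_int n * \<phi> (I (k + n)) = 0"
    proof (cases "n = 0")
      case False
      then have "k + n \<notin> S_phi \<phi>" using S by simp
      then show ?thesis by (simp add: S_phi_def)
    qed simp
    then show ?thesis
      by (auto simp: 1 act_lc_Cons act_I_Cons \<phi>_Z2)
  qed (simp_all add: act_lc_Cons)
qed

lemma nf_word_snoc_L: "nf_word (w @ [L k]) = act_word w [(1,[k])]"
  by (simp add: nf_word_append act_lc_Cons)

lemma Wker_lc_snoc_L: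
  assumes S: "S_phi \<phi> = {k}" and W: "coeff ts \<in> Wker \<phi>"
  shows "coeff (nf (lc_snoc ts (L k))) r = 0"
proof -
  have ind: "coeff (nf (lc_snoc [(1, a @ [p]), (- \<phi> p, a)] (L k))) r = 0" if "p \<in> p_basis" for p a r
  proof -
    have "nf (lc_snoc [(1, a @ [p]), (- \<phi> p, a)] (L k))
        = lc_scale 1 (act_word a (act_lc p [(1,[k])])) @ lc_scale (- \<phi> p) (act_word a [(1,[k])]) @ []"
      by (simp only: lc_snoc_Cons lc_snoc_Nil nf_Cons nf_Nil nf_word_snoc_L act_word_append
          act_word_Cons act_word_Nil)
    moreover have "coeff (act_word a (act_lc p [(1,[k])])) r = coeff (lc_scale (\<phi> p) (act_word a [(1,[k])])) r"
      unfolding act_word_lc_scale[symmetric]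
      by (rule coeff_act_word_cong) (simp add: act_p_basis_L_vacuum[OF S that])
    ultimately show ?thesis by simp
  qed
  have "\<exists>us. coeff ts = coeff us \<and> (\<forall>r. coeff (nf (lc_snoc us (L k))) r = 0)"
  proof (rule Wker_induct_lc[OF W])
    fix p a assume "p \<in> p_basis"
    then show "\<forall>r. coeff (nf (lc_snoc [(1, a @ [p]), (- \<phi> p, a)] (L k))) r = 0" using ind by blast
  qed (simp_all add: lc_snoc_rel_lc coeff_nf_rel_lc)
  then obtain us where "coeff ts = coeff us" "\<forall>r. coeff (nf (lc_snoc us (L k))) r = 0" by blast
  moreover have "coeff (nf (lc_snoc ts (L k))) r = coeff (nf (lc_snoc us (L k))) r"
    by (rule coeff_nf_cong) (simp add: coeff_lc_snoc \<open>coeff ts = coeff us\<close>)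
  ultimately show ?thesis by simp
qed

lemma act_word_L_leading:
  "sorted n \<Longrightarrow> \<exists>E. lc_all (\<lambda>r. length r \<le> length n) E \<and>
     (\<forall>r. coeff (act_word (map L n) [(1,[k])]) r = coeff ((1, insort k n) # E) r)"
proof (induction n)
  case (Cons j n)
  have n: "sorted n" "\<forall>e\<in>set n. j \<le> e" using Cons.prems by auto
  obtain E1 where E1: "lc_all (\<lambda>r. length r \<le> length n) E1"
    "\<And>r. coeff (act_word (map L n) [(1,[k])]) r = coeff ((1, insort k n) # E1) r"
    using Cons.IH[OF n(1)] by blast
  let ?E = "tl (act (L j) (insort k n)) @ act_lc (L j) E1"
  have "lc_all (\<lambda>r. length r \<le> length (j#n)) (tl (act (L j) (insort k n)))"
    using act_L_tl_length by (rule lc_all_mono) simp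
  moreover have "lc_all (\<lambda>r. length r \<le> length (j#n)) (act_lc (L j) E1)"
    unfolding act_lc_def
  proof (rule lc_all_lc_ext)
    fix c m assume "(c,m) \<in> set E1"
    then have "length m \<le> length n" using E1(1) by (rule lc_all_mem[rotated])
    then show "lc_all (\<lambda>r. length r \<le> length (j#n)) (act (L j) m)"
      by (intro lc_all_mono[OF act_L_length]) simp
  qed
  moreover have "coeff (act_word (map L (j#n)) [(1,[k])]) r = coeff ((1, insort k (j#n)) # ?E) r" for r
  proof -
    have "coeff (act_word (map L (j#n)) [(1,[k])]) r = coeff (act_lc (L j) ((1, insort k n) # E1)) r"
      by simp (rule coeff_act_lc_cong, use E1(2) in simp)
    also have "\<dots> = coeff (act (L j) (insort k n)) r + coeff (act_lc (L j) E1) r"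
      by (simp add: act_lc_Cons)
    also have "act (L j) (insort k n) = (1, insort j (insort k n)) # tl (act (L j) (insort k n))"
      by (rule act_L_leading)
    also have "insort j (insort k n) = insort k (j#n)"
      using insort_left_comm[of j k n] insort_is_Cons[OF n(2)] by simp
    finally show ?thesis by simp
  qed
  ultimately show ?case by (intro exI[of _ ?E]) simp
qed (intro exI[of _ "[]"], simp)

lemma coeff_act_word_L_top:
  assumes "sorted n" "length n < length r"
  shows "coeff (act_word (map L n) [(1,[k])]) r = (if r = insort k n then 1 else 0)"
proof -
  obtain E where E: "lc_all (\<lambda>r. length r \<le> length n) E"
    "coeff (act_word (map L n) [(1,[k])]) r = coeff ((1, insort k n) # E) r"
    using act_word_L_leading[OF assms(1), of k] by blast
  have "coeff E r = 0"
    using E(1) assms(2) by (intro coeff_eq_0I) (auto dest: lc_all_mem)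
  then show ?thesis using E(2) by simp
qed

lemma nf_lc_snoc_L_words: "nf (lc_snoc (L_words Q) (L k)) = lc_ext (\<lambda>n. act_word (map L n) [(1,[k])]) Q"
  by (induction Q) (auto simp: nf_word_snoc_L)

lemma lc_ext_act_word_L_nonconstant:
  assumes sorted: "lc_all sorted Q" and "coeff Q n1 \<noteq> 0"
  shows "\<exists>r. r \<noteq> [] \<and> coeff (lc_ext (\<lambda>n. act_word (map L n) [(1,[k])]) Q) r \<noteq> 0"
proof -
  let ?F = "\<lambda>n. act_word (map L n) [(1,[k])]"
  let ?N = "{n \<in> lc_keys Q. coeff Q n \<noteq> 0}"
  have N_fin: "finite ?N"
    by (rule finite_subset[OF _ finite_lc_keys[of Q]]) blast
  have "n1 \<in> ?N" using assms(2) coeff_nonzero_in_keys[OF assms(2)] by simp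
  then have "Max (length ` ?N) \<in> length ` ?N"
    using N_fin by (intro Max_in finite_imageI) blast+
  then obtain n2 where n2: "Max (length ` ?N) = length n2" "n2 \<in> ?N" by (rule imageE)
  have longest: "length n \<le> length n2" if "n \<in> ?N" for n
    using Max_ge[OF finite_imageI[OF N_fin, of length] imageI[OF that, of length]] n2(1) by simp
  let ?r = "insort k n2"
  have "coeff Q n * coeff (?F n) ?r = 0" if "n \<in> lc_keys Q" "n \<noteq> n2" for n
  proof (cases "coeff Q n = 0")
    case False
    then have "n \<in> ?N" using that(1) by simp
    have "sorted n" "sorted n2" using that(1) n2(2) lc_all_keys[OF sorted] by auto
    have "length n < length ?r" using longest[OF \<open>n \<in> ?N\<close>] by simp
    moreover have "?r \<noteq> insort k n"
    proof
      assume "?r = insort k n"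
      then have "add_mset k (mset n2) = add_mset k (mset n)" by (metis mset_insort)
      then have "mset n2 = mset n" by simp
      then show False using sorted_mset_inj[OF \<open>sorted n\<close> \<open>sorted n2\<close>] that(2) by simp
    qed
    ultimately have "coeff (?F n) ?r = 0" using coeff_act_word_L_top[OF \<open>sorted n\<close>] by simp
    then show ?thesis by simp
  qed simp
  then have "(\<Sum>n\<in>lc_keys Q. coeff Q n * coeff (?F n) ?r) = coeff Q n2 * coeff (?F n2) ?r"
    using n2(2) by (intro sum.mono_neutral_left[of _ "{n2}", simplified, symmetric]) auto
  also have "\<dots> \<noteq> 0"
    using n2(2) lc_all_keys[OF sorted] by (simp add: coeff_act_word_L_top)
  finally show ?thesis
    by (intro exI[of _ ?r]) (simp add: coeff_lc_ext_sum[of "lc_keys Q"])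
qed

end
context W_model
begin

text \<open>The submodule \<open>U(L) L\<^sub>k w\<^sub>\<phi>\<close> of \<open>W(\<phi>)\<close>, as a set of elements of \<open>T(L)\<close>.\<close>
definition L_submodule :: "int \<Rightarrow> (hv list \<Rightarrow> complex) set" where
  "L_submodule k = {coeff ts | ts. \<exists>us. \<forall>r. coeff (nf ts) r = coeff (nf (lc_snoc us (L k))) r}"

lemma W_submodule_L_submodule: "W_submodule \<phi> (L_submodule k)"
  unfolding W_submodule_def
proof (intro conjI ballI allI)
  show "Wker \<phi> \<subseteq> L_submodule k"
  proof
    fix f assume "f \<in> Wker \<phi>"
    then obtain ts where "f = coeff ts" "\<And>r. coeff (nf ts) r = 0"
      using Wker_obtain_nf_0 by blast
    then show "f \<in> L_submodule k"
      unfolding L_submodule_def by (intro CollectI exI[of _ ts] conjI exI[of _ "[]"]) simp_all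
  qed
  show "L_submodule k \<subseteq> Tfin"
    unfolding L_submodule_def using coeff_in_Tfin by blast
next
  fix f g assume "f \<in> L_submodule k" "g \<in> L_submodule k"
  then obtain ts us ts' us' where "f = coeff ts" "\<forall>r. coeff (nf ts) r = coeff (nf (lc_snoc us (L k))) r"
      "g = coeff ts'" "\<forall>r. coeff (nf ts') r = coeff (nf (lc_snoc us' (L k))) r"
    unfolding L_submodule_def by blast
  then show "(\<lambda>v. f v + g v) \<in> L_submodule k"
    unfolding L_submodule_def by (intro CollectI exI[of _ "ts @ ts'"] conjI exI[of _ "us @ us'"]) (simp_all add: fun_eq_iff)
next
  fix f c assume "f \<in> L_submodule k"
  then obtain ts us where "f = coeff ts" "\<forall>r. coeff (nf ts) r = coeff (nf (lc_snoc us (L k))) r"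
    unfolding L_submodule_def by blast
  then show "(\<lambda>v. c * f v) \<in> L_submodule k"
    unfolding L_submodule_def
    by (intro CollectI exI[of _ "lc_scale c ts"] conjI exI[of _ "lc_scale c us"]) (simp_all add: fun_eq_iff)
next
  fix f x assume "f \<in> L_submodule k"
  then obtain ts us where f: "f = coeff ts" "\<forall>r. coeff (nf ts) r = coeff (nf (lc_snoc us (L k))) r"
    unfolding L_submodule_def by blast
  have "coeff (nf (lc_cons x ts)) r = coeff (nf (lc_snoc (lc_cons x us) (L k))) r" for r
    unfolding nf_lc_cons lc_snoc_lc_cons by (rule coeff_act_lc_cong) (use f(2) in simp)
  then show "lmul x f \<in> L_submodule k"
    unfolding L_submodule_def using f(1) lmul_coeff by blast
qed

lemma L_submodule_ne_Wker: "L_submodule k \<noteq> Wker \<phi>"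
proof
  assume "L_submodule k = Wker \<phi>"
  moreover have "coeff [(1,[L k])] \<in> L_submodule k"
    unfolding L_submodule_def by (intro CollectI exI[of _ "[(1,[L k])]"] conjI exI[of _ "[(1,[])]"]) simp_all
  ultimately have "coeff (nf [(1,[L k])]) [k] = 0"
    using coeff_in_Wker_iff by blast
  then show False by (simp add: act_lc_Cons)
qed

lemma vacuum_notin_L_submodule:
  assumes S: "S_phi \<phi> = {k}"
  shows "mono [] \<notin> L_submodule k"
proof
  assume "mono [] \<in> L_submodule k"
  then obtain ts us where ts: "coeff [(1,[])] = coeff ts" "\<forall>r. coeff (nf ts) r = coeff (nf (lc_snoc us (L k))) r"
    unfolding L_submodule_def mono_eq_coeff by blast
  let ?F = "\<lambda>n. act_word (map L n) [(1,[k])]"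
  have "coeff (us @ lc_scale (-1) (L_words (nf us))) \<in> Wker \<phi>"
    using W_equiv_nf[of us] by (simp add: W_equiv_iff)
  then have "coeff (nf (lc_snoc (us @ lc_scale (-1) (L_words (nf us))) (L k))) r = 0" for r
    by (rule Wker_lc_snoc_L[OF S])
  then have "coeff (nf (lc_snoc us (L k))) r = coeff (lc_ext ?F (nf us)) r" for r
    by (simp add: nf_lc_snoc_L_words)
  moreover have "coeff (nf ts) r = coeff [(1,[])] r" for r
    using coeff_nf_cong[of "[(1,[])]" ts r] ts(1) by simp
  ultimately have const: "coeff (lc_ext ?F (nf us)) r = coeff [(1,[])] r" for r
    using ts(2) by simp
  show False
  proof (cases "\<exists>n. coeff (nf us) n \<noteq> 0")
    case False
    then have "coeff (lc_ext ?F (nf us)) [] = coeff (lc_ext ?F []) []"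
      by (intro coeff_lc_ext_cong) simp
    then show False using const[of "[]"] by simp
  next
    case True
    then obtain r where "r \<noteq> []" "coeff (lc_ext ?F (nf us)) r \<noteq> 0"
      using lc_ext_act_word_L_nonconstant[OF nf_sorted] by blast
    then show False using const[of r] by simp
  qed
qed

theorem not_W_irreducible_if_S_phi_singleton:
  assumes "S_phi \<phi> = {k}"
  shows "\<not> W_irreducible \<phi>"
proof
  assume "W_irreducible \<phi>"
  then have "L_submodule k = Wker \<phi> \<or> L_submodule k = Tfin"
    using W_submodule_L_submodule unfolding W_irreducible_iff by blast
  moreover have "L_submodule k \<noteq> Tfin"
    using vacuum_notin_L_submodule[OF assms] coeff_in_Tfin by (auto simp: mono_eq_coeff)
  ultimately show False using L_submodule_ne_Wker by blast
qed

end

theorem theorem4p4: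
  fixes \<phi> :: "hv \<Rightarrow> complex"
  assumes "finite_hom \<phi>"
    and "\<exists>h\<in>H_basis. \<phi> h \<noteq> 0"
  shows "W_irreducible \<phi> \<longleftrightarrow> card (S_phi \<phi>) \<ge> 2"
proof -
  have fin: "finite (S_phi \<phi>)" and model: "W_model \<phi>"
    using assms(1) by (simp_all add: finite_hom_def p_hom_def W_model_def)
  interpret W_model \<phi> by (rule model)
  obtain n where "\<phi> (I n) \<noteq> 0"
    using assms(2) \<phi>_Z3 by (auto simp: H_basis_def)
  then have "card (S_phi \<phi>) \<noteq> 0"
    using fin by (auto simp: S_phi_def)
  show ?thesis
  proof (cases "card (S_phi \<phi>) \<ge> 2")
    case False
    with \<open>card (S_phi \<phi>) \<noteq> 0\<close> have "card (S_phi \<phi>) = 1" by simp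
    then obtain k where "S_phi \<phi> = {k}" by (rule card_1_singletonE)
    then show ?thesis using False not_W_irreducible_if_S_phi_singleton by simp
  qed (simp add: W_irreducible_if_card_S_phi_ge_2[OF fin])
qed

end
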